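(* Let the training sample $(X_i,Y_i)$, $i=1,\dots,n$, be i.i.d. with $X_i\sim\mu$ and $Y_i=f^\star(X_i)+\xi_i$, where $f^\star\in L_2(\mu)$ is $\mathcal{G}$-invariant, $\mathbb{E}[\xi_i\mid X_1,\dots,X_n]=0$ and $\mathbb{E}[\xi_i\xi_j\mid X_1,\dots,X_n]=\sigma^2\delta_{ij}<\infty$. Similarly let $X\sim\mu$ and $Y=f^\star(X)+\xi$ with $\mathbb{E}[\xi\mid X]=0$ and $\mathbb{E}[\xi^2]=\sigma^2$. Let $\rho>0$ and let $f$ be the kernel ridge regression solution $f(x)=k_{\mathbf{X}}(x)^\top(K+\rho I)^{-1}\mathbf{Y}$, where $K_{ij}=k(X_i,X_j)$, $k_{\mathbf{X}}(x)_i=k(X_i,x)$, $\mathbf{Y}_i=Y_i$ (this is the unique minimiser over $h\in\mathcal{H}$ of $\sum_{i=1}^n(h(X_i)-Y_i)^2+\rho\|h\|_\mathcal{H}^2$). Let $\bar f=\mathcal{O}\iota f$ and let $f'\in L_2(\mu)$ be any predictor with $R[f']\le R[\bar f]$. Then \[\mathbb{E}[R[f]-R[f']]\ge\mathbb{E}\big[\|(\mathrm{id}-\mathcal{O})\iota\Lambda_{n,\rho}f^\star\|_\mu^2\big]+\sigma^2\frac{\|k^\perp\|^2_{L_2(\mu\otimes\mu)}}{(\sqrt nM_k+\rho/\sqrt n)^2},\] where $\Lambda_{n,\rho}f^\star\in\mathcal{H}$ is the solution of the noiseless problem $\operatorname{argmin}_{h\in\mathcal{H}}\sum_{i=1}^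n(h(X_i)-f^\star(X_i))^2+\rho\|h\|_\mathcal{H}^2$.
   Context: $\mathcal{G}$ is a compact, second countable, Hausdorff topological group with Haar probability measure $\lambda$, acting measurably on a nonempty Polish space $\mathcal{X}$. $\mu$ is a $\mathcal{G}$-invariant Borel probability measure on $\mathcal{X}$ with $\mathrm{supp}\,\mu=\mathcal{X}$. $k:\mathcal{X}\times\mathcal{X}\to\mathbb{R}$ is a measurable symmetric positive definite kernel with reproducing kernel Hilbert space $\mathcal{H}$, such that $k(\cdot,x)$ is continuous for every $x$ and $M_k=\sup_xk(x,x)<\infty$. $\iota:\mathcal{H}\to L_2(\mu)$ is the inclusion map. $\mathcal{O}h(x)=\int_\mathcal{G}h(gx)\,d\lambda(g)$ on $L_2(\mu)$, with $\|\cdot\|_\mu$ the $L_2(\mu)$ norm. $k^\perp(x,y)=k(x,y)-\int_\mathcal{G}k(x,gy)\,d\lambda(g)$ and for measurable $j:\mathcal{X}\times\mathcal{X}\to\mathbb{R}$, $\|j\|^2_{L_2(\mu\otimes\mu)}=\int\int j(x,y)^2d\mu(x)d\mu(y)$. The risk of a predictor $h$ is $R[h]=\mathbb{E}[(h(X)-Y)^2]$ conditional on the training sample; the outer expectation is over the training sample. *)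

theory Defs
  imports "HOL-Analysis.Analysis" "HOL-Probability.Probability"
begin

text \<open>Haar probability measure on a compact (second countable Hausdorff) topological group,
  written additively (group_add is not assumed commutative): a left-invariant Borel
  probability measure.\<close>
definition haar_prob :: "'g::topological_group_add measure \<Rightarrow> bool" where
  "haar_prob lam \<longleftrightarrow> prob_space lam \<and> sets lam = sets borel \<and>
     (\<forall>g. distr lam borel (\<lambda>h. g + h) = lam)"

definition measurable_action :: "('g::{group_add,topological_space} \<Rightarrow> 'x::topological_space \<Rightarrow> 'x) \<Rightarrow> bool" where
  "measurable_action act \<longleftrightarrow>
     (\<forall>x. act 0 x = x) \<and> (\<forall>g h x. act (g + h) x = act g (act h x)) \<and>
     (\<lambda>(g, x). act g x) \<in> measurable (borel \<Otimes>\<^sub>M borel) (borel :: 'x measure)"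

definition measure_support :: "'x::topological_space measure \<Rightarrow> 'x set" where
  "measure_support M = {x. \<forall>U. open U \<and> x \<in> U \<longrightarrow> emeasure M U > 0}"

definition pd_kernel :: "('x \<Rightarrow> 'x \<Rightarrow> real) \<Rightarrow> bool" where
  "pd_kernel k \<longleftrightarrow> (\<forall>x y. k x y = k y x) \<and>
     (\<forall>(xs :: 'x list) (c :: real list). length c = length xs \<longrightarrow>
        (\<Sum>i<length xs. \<Sum>j<length xs. c!i * c!j * k (xs!i) (xs!j)) \<ge> 0)"

text \<open>Kernel ridge regression solution f(x) = k_X(x)^T (K + rho I)^{-1} Y for a sample indexed
  by the finite type 'n (sample size n = CARD('n)).\<close>
definition krr :: "('x \<Rightarrow> 'x \<Rightarrow> real) \<Rightarrow> real \<Rightarrow> ('n::finite \<Rightarrow> 'x) \<Rightarrow> real^'n \<Rightarrow> 'x \<Rightarrow> real" where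
  "krr k \<rho> Xs Ys x =
     (\<chi> i. k (Xs i) x) \<bullet> (matrix_inv ((\<chi> i j. k (Xs i) (Xs j)) + \<rho> *\<^sub>R mat 1) *v Ys)"

definition orbit_avg :: "'g measure \<Rightarrow> ('g \<Rightarrow> 'x \<Rightarrow> 'x) \<Rightarrow> ('x \<Rightarrow> real) \<Rightarrow> 'x \<Rightarrow> real" where
  "orbit_avg lam act h x = (\<integral>g. h (act g x) \<partial>lam)"

definition kperp :: "'g measure \<Rightarrow> ('g \<Rightarrow> 'x \<Rightarrow> 'x) \<Rightarrow> ('x \<Rightarrow> 'x \<Rightarrow> real) \<Rightarrow> 'x \<Rightarrow> 'x \<Rightarrow> real" where
  "kperp lam act k x y = k x y - (\<integral>g. k x (act g y) \<partial>lam)"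

definition L2_norm_sq :: "'x measure \<Rightarrow> ('x \<Rightarrow> real) \<Rightarrow> real" where
  "L2_norm_sq M h = (\<integral>x. (h x)\<^sup>2 \<partial>M)"

definition L2_norm_sq2 :: "'x measure \<Rightarrow> ('x \<Rightarrow> 'x \<Rightarrow> real) \<Rightarrow> real" where
  "L2_norm_sq2 M j = (\<integral>x. (\<integral>y. (j x y)\<^sup>2 \<partial>M) \<partial>M)"

text \<open>Risk R[h] = E[(h(X) - Y)^2] for a test pair (X,Y) = (Xt, fstar(Xt) + xit) living on the
  probability space Q, independent of the training sample (which lives on a different space).\<close>
definition risk :: "'q measure \<Rightarrow> ('q \<Rightarrow> 'x) \<Rightarrow> ('q \<Rightarrow> real) \<Rightarrow> ('x \<Rightarrow> real) \<Rightarrow> ('x \<Rightarrow> real) \<Rightarrow> real" where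
  "risk Q Xt xit fstar h = (\<integral>q. (h (Xt q) - (fstar (Xt q) + xit q))\<^sup>2 \<partial>Q)"

end

theory Submission
  imports Defs
begin

text \<open>
  Write the ridge regression predictor as \<open>f = \<Sum>\<^sub>j a\<^sub>j Y\<^sub>j\<close> with \<open>a(x) = (K + \<rho>I)\<^sup>-\<^sup>1 k\<^sub>X(x)\<close>.
  As \<open>f\<^sup>\<star>\<close> is invariant and orbit averaging \<open>O\<close> is self-adjoint on \<open>L\<^sub>2(\<mu>)\<close>, the excess risk
  splits orthogonally: \<open>R[f] - R[f'] \<ge> R[f] - R[O f] = \<parallel>(id - O) f\<parallel>\<^sup>2 = Y\<^sup>T D Y\<close>, where \<open>D\<close> is the
  Gram matrix of \<open>d\<^sub>j = (id - O) a\<^sub>j\<close>. Given the inputs, the noise is centred with covariance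
  \<open>\<sigma>\<^sup>2I\<close>, hence \<open>E[Y\<^sup>T D Y] = E[\<parallel>(id - O) \<Lambda>f\<^sup>\<star>\<parallel>\<^sup>2] + \<sigma>\<^sup>2 E[tr D]\<close>. Finally
  \<open>\<Sum>\<^sub>j (K + \<rho>I)\<^sub>j\<^sub>l d\<^sub>j = k\<^sup>\<bottom>(X\<^sub>l, -)\<close>, and a weighted Cauchy-Schwarz inequality using that the rows
  and columns of \<open>K + \<rho>I\<close> have absolute sums at most \<open>n M\<^sub>k + \<rho>\<close> gives
  \<open>\<Sum>\<^sub>l \<parallel>k\<^sup>\<bottom>(X\<^sub>l, -)\<parallel>\<^sup>2 \<le> (n M\<^sub>k + \<rho>)\<^sup>2 tr D\<close>, whose left side has expectation \<open>n \<parallel>k\<^sup>\<bottom>\<parallel>\<^sup>2\<close>.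
\<close>

lemma pd_kernel_sym: "pd_kernel k \<Longrightarrow> k x y = k y x"
  unfolding pd_kernel_def by blast

lemma pd_kernel_quadratic_form_nonneg:
  fixes Xs :: "'n::finite \<Rightarrow> 'x" and c :: "real^'n"
  assumes "pd_kernel k"
  shows "0 \<le> (\<Sum>i\<in>UNIV. \<Sum>j\<in>UNIV. c$i * c$j * k (Xs i) (Xs j))"
proof -
  obtain es where es: "distinct es" "set es = (UNIV::'n set)"
    using finite_distinct_list[of "UNIV::'n set"] by auto
  have b: "bij_betw ((!) es) {..<length es} UNIV"
    using bij_betw_nth[OF es(1) refl es(2)[symmetric]] .
  have "0 \<le> (\<Sum>i<length (map Xs es). \<Sum>j<length (map Xs es).
     (map (($) c) es)!i * (map (($) c) es)!j * k ((map Xs es)!i) ((map Xs es)!j))"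
    using assms[unfolded pd_kernel_def, THEN conjunct2, rule_format, of "map (($) c) es" "map Xs es"]
    by simp
  also have "\<dots> = (\<Sum>i<length es. \<Sum>j<length es. c$(es!i) * c$(es!j) * k (Xs (es!i)) (Xs (es!j)))"
    by simp
  also have "\<dots> = (\<Sum>i<length es. \<Sum>j\<in>UNIV. c$(es!i) * c$j * k (Xs (es!i)) (Xs j))"
    by (intro sum.cong refl) (rule sum.reindex_bij_betw[OF b])
  also have "\<dots> = (\<Sum>i\<in>UNIV. \<Sum>j\<in>UNIV. c$i * c$j * k (Xs i) (Xs j))"
    by (rule sum.reindex_bij_betw[OF b])
  finally show ?thesis .
qed

lemma pd_kernel_two_points:
  assumes "pd_kernel k"
  shows "0 \<le> a * a * k x x + 2 * a * b * k x y + b * b * k y y"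
proof -
  have "0 \<le> (\<Sum>i<length [x,y]. \<Sum>j<length [x,y]. [a,b]!i * [a,b]!j * k ([x,y]!i) ([x,y]!j))"
    using assms[unfolded pd_kernel_def, THEN conjunct2, rule_format, of "[a,b]" "[x,y]"] by simp
  also have "\<dots> = a * a * k x x + a * b * k x y + b * a * k y x + b * b * k y y"
    by (simp add: numeral_2_eq_2)
  finally show ?thesis
    using pd_kernel_sym[OF assms, of y x] by (simp add: algebra_simps)
qed

lemma pd_kernel_abs_le:
  assumes "pd_kernel k" "\<And>z. k z z \<le> M"
  shows "\<bar>k x y\<bar> \<le> M"
proof -
  have "0 \<le> k x x - 2 * k x y + k y y" "0 \<le> k x x + 2 * k x y + k y y"
    using pd_kernel_two_points[OF assms(1), of 1 x "-1" y] pd_kernel_two_points[OF assms(1), of 1 x 1 y]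
    by simp_all
  then show ?thesis using assms(2)[of x] assms(2)[of y] by linarith
qed

section \<open>The regularised Gram matrix\<close>

definition reg_gram :: "('x \<Rightarrow> 'x \<Rightarrow> real) \<Rightarrow> real \<Rightarrow> ('n::finite \<Rightarrow> 'x) \<Rightarrow> real^'n^'n" where
  "reg_gram k \<rho> Xs = (\<chi> i j. k (Xs i) (Xs j)) + \<rho> *\<^sub>R mat 1"

lemma reg_gram_entry: "reg_gram k \<rho> Xs $ i $ j = k (Xs i) (Xs j) + (if i = j then \<rho> else 0)"
  by (simp add: reg_gram_def mat_def)

lemma reg_gram_quadratic_form_ge:
  fixes v :: "real^'n::finite"
  assumes "pd_kernel k"
  shows "\<rho> * (v \<bullet> v) \<le> v \<bullet> (reg_gram k \<rho> Xs *v v)"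
proof -
  have "reg_gram k \<rho> Xs *v v = (\<chi> i j. k (Xs i) (Xs j)) *v v + \<rho> *\<^sub>R v"
    by (simp add: reg_gram_def matrix_vector_mult_add_rdistrib scaleR_matrix_vector_assoc[symmetric])
  then have "v \<bullet> (reg_gram k \<rho> Xs *v v) = v \<bullet> ((\<chi> i j. k (Xs i) (Xs j)) *v v) + \<rho> * (v \<bullet> v)"
    by (simp add: inner_add_right)
  also have "v \<bullet> ((\<chi> i j. k (Xs i) (Xs j)) *v v) = (\<Sum>i\<in>UNIV. \<Sum>j\<in>UNIV. v$i * v$j * k (Xs i) (Xs j))"
    by (simp add: inner_vec_def matrix_vector_mult_def sum_distrib_left mult_ac)
  finally show ?thesis using pd_kernel_quadratic_form_nonneg[OF assms, of v Xs] by simp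
qed

lemma invertible_reg_gram:
  assumes "pd_kernel k" "\<rho> > 0"
  shows "invertible (reg_gram k \<rho> (Xs::'n::finite \<Rightarrow> 'x))"
proof -
  have "v = 0" if "reg_gram k \<rho> Xs *v v = 0" for v
  proof -
    have "\<rho> * (v \<bullet> v) \<le> 0" using reg_gram_quadratic_form_ge[OF assms(1), of \<rho> v Xs] that by simp
    then have "v \<bullet> v \<le> 0" using assms(2) by (simp add: mult_le_0_iff)
    then show "v = 0" by (metis antisym inner_ge_zero inner_eq_zero_iff)
  qed
  then show ?thesis using matrix_left_invertible_ker invertible_left_inverse by blast
qed

lemma matrix_inv_cancel:
  fixes A :: "real^'n::finite^'n"
  assumes "invertible A"
  shows "A ** matrix_inv A = mat 1" "matrix_inv A ** A = mat 1"
  using someI_ex[OF assms[unfolded invertible_def]] unfolding matrix_inv_def by auto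

lemma norm_reg_gram_inv_le:
  assumes "pd_kernel k" "\<rho> > 0"
  shows "\<rho> * norm (matrix_inv (reg_gram k \<rho> (Xs::'n::finite \<Rightarrow> 'x)) *v e) \<le> norm e"
proof -
  define w where "w = matrix_inv (reg_gram k \<rho> Xs) *v e"
  have "reg_gram k \<rho> Xs *v w = e" unfolding w_def
    using matrix_inv_cancel(1)[OF invertible_reg_gram[OF assms]]
    by (metis matrix_vector_mul_assoc matrix_vector_mul_lid)
  then have "\<rho> * (norm w * norm w) \<le> w \<bullet> e"
    using reg_gram_quadratic_form_ge[OF assms(1), of \<rho> w Xs] by (simp add: norm_eq_sqrt_inner)
  also have "\<dots> \<le> norm w * norm e" by (rule norm_cauchy_schwarz)
  finally have "(\<rho> * norm w) * norm w \<le> norm e * norm w" by (simp add: mult_ac)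
  then have "\<rho> * norm w \<le> norm e"
    by (cases "norm w = 0") (auto intro: mult_right_le_imp_le)
  then show ?thesis unfolding w_def .
qed

lemma matrix_vector_mult_axis_nth: "((B::real^'n::finite^'m::finite) *v axis j 1) $ i = B $ i $ j"
  unfolding matrix_vector_mult_basis column_def by (rule vec_lambda_beta)

lemma abs_reg_gram_inv_entry_le:
  assumes "pd_kernel k" "\<rho> > 0"
  shows "\<bar>matrix_inv (reg_gram k \<rho> (Xs::'n::finite \<Rightarrow> 'x)) $ i $ j\<bar> \<le> 1 / \<rho>"
proof -
  let ?B = "matrix_inv (reg_gram k \<rho> Xs)"
  have "\<bar>?B $ i $ j\<bar> \<le> norm (?B *v axis j 1)"
    using component_le_norm_cart[of "?B *v axis j 1" i] by (simp only: matrix_vector_mult_axis_nth)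
  also have "\<dots> \<le> 1 / \<rho>"
    using norm_reg_gram_inv_le[OF assms, of Xs "axis j 1"] assms(2)
    by (simp add: norm_axis_1 pos_le_divide_eq mult.commute)
  finally show ?thesis .
qed

text \<open>Cramer's rule exhibits the entries of the inverse as rational functions of the entries of
  the Gram matrix; this is how their measurability in the sample is obtained.\<close>

lemma reg_gram_inv_entry_cramer:
  assumes "pd_kernel k" "\<rho> > 0"
  shows "matrix_inv (reg_gram k \<rho> (Xs::'n::finite \<Rightarrow> 'x)) $ i $ j =
     det (\<chi> r c. if c = i then axis j 1 $ r else reg_gram k \<rho> Xs $ r $ c) / det (reg_gram k \<rho> Xs)"
proof -
  let ?A = "reg_gram k \<rho> Xs"
  have inv: "invertible ?A" by (rule invertible_reg_gram[OF assms])
  have "?A *v (matrix_inv ?A *v axis j 1) = axis j 1"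
    using matrix_inv_cancel(1)[OF inv] by (metis matrix_vector_mul_assoc matrix_vector_mul_lid)
  then have "matrix_inv ?A *v axis j 1
      = (\<chi> c. det (\<chi> r c'. if c' = c then axis j 1 $ r else ?A $ r $ c') / det ?A)"
    using cramer inv invertible_det_nz by blast
  then have "(matrix_inv ?A *v axis j 1) $ i
      = det (\<chi> r c'. if c' = i then axis j 1 $ r else ?A $ r $ c') / det ?A"
    by simp
  then show ?thesis by (simp only: matrix_vector_mult_axis_nth)
qed

lemma borel_measurable_det:
  fixes Mf :: "'a \<Rightarrow> real^'n::finite^'n"
  assumes "\<And>r c. (\<lambda>z. Mf z $ r $ c) \<in> borel_measurable M"
  shows "(\<lambda>z. det (Mf z)) \<in> borel_measurable M"
  unfolding det_def by (intro borel_measurable_sum borel_measurable_times borel_measurable_const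
      borel_measurable_prod assms)

section \<open>Haar measure\<close>

lemma borel_measurable_uminus_group [measurable]:
  "(uminus :: 'g::{topological_group_add, second_countable_topology} \<Rightarrow> 'g) \<in> borel_measurable borel"
  by (rule borel_measurable_continuous_onI) (intro continuous_intros)

lemma haar_prob_nn_integral_add_left:
  fixes lam :: "'g::{topological_group_add, second_countable_topology} measure"
  assumes "haar_prob lam" and [measurable]: "f \<in> borel_measurable borel"
  shows "(\<integral>\<^sup>+y. f y \<partial>lam) = (\<integral>\<^sup>+y. f (c + y) \<partial>lam)"
proof -
  have [measurable_cong]: "sets lam = sets borel" and "distr lam borel (\<lambda>h. c + h) = lam"
    using assms(1) unfolding haar_prob_def by auto
  then have "(\<integral>\<^sup>+y. f y \<partial>lam) = (\<integral>\<^sup>+y. f y \<partial>distr lam borel (\<lambda>h. c + h))" by simp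
  also have "\<dots> = (\<integral>\<^sup>+y. f (c + y) \<partial>lam)" by (rule nn_integral_distr) measurable
  finally show ?thesis .
qed

text \<open>Left invariance and Fubini, applied to the reflected measure, give invariance under inversion
  and hence right invariance; the latter is what makes orbit averages invariant functions.\<close>

lemma haar_prob_nn_integral_uminus:
  fixes lam :: "'g::{topological_group_add, second_countable_topology} measure"
  assumes haar: "haar_prob lam" and [measurable]: "f \<in> borel_measurable borel"
  shows "(\<integral>\<^sup>+y. f y \<partial>lam) = (\<integral>\<^sup>+y. f (- y) \<partial>lam)"
proof -
  have P: "prob_space lam" and [measurable_cong]: "sets lam = sets borel"
    using haar unfolding haar_prob_def by auto
  interpret prob_space lam by (rule P)
  define Li where "Li = distr lam borel uminus"
  have [measurable_cong]: "sets Li = sets borel" unfolding Li_def by simp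
  have Li_prob: "prob_space Li" unfolding Li_def by (rule prob_space_distr) measurable
  interpret Li: prob_space Li by (rule Li_prob)
  interpret pair_sigma_finite lam Li
    by (simp add: pair_sigma_finite_def prob_space_imp_sigma_finite Li_prob P)
  have "(\<integral>\<^sup>+x. f x \<partial>lam) = (\<integral>\<^sup>+y. (\<integral>\<^sup>+x. f (y + x) \<partial>lam) \<partial>Li)"
    using haar_prob_nn_integral_add_left[OF haar] by (simp add: Li.emeasure_space_1)
  also have "\<dots> = (\<integral>\<^sup>+x. (\<integral>\<^sup>+y. f (y + x) \<partial>Li) \<partial>lam)"
    by (rule Fubini') measurable
  also have "\<dots> = (\<integral>\<^sup>+x. (\<integral>\<^sup>+y. f (- y + x) \<partial>lam) \<partial>lam)"
    unfolding Li_def by (intro nn_integral_cong nn_integral_distr) measurable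
  also have "\<dots> = (\<integral>\<^sup>+x. (\<integral>\<^sup>+y. f (- (x + y) + x) \<partial>lam) \<partial>lam)"
    by (intro nn_integral_cong haar_prob_nn_integral_add_left[OF haar]) measurable
  also have "\<dots> = (\<integral>\<^sup>+y. f (- y) \<partial>lam)"
    by (simp add: minus_add add.assoc emeasure_space_1)
  finally show ?thesis .
qed

lemma haar_prob_right_invariant:
  fixes lam :: "'g::{topological_group_add, second_countable_topology} measure"
  assumes haar: "haar_prob lam"
  shows "distr lam borel (\<lambda>h. h + g0) = lam"
proof (rule measure_eqI)
  have S [measurable_cong]: "sets lam = sets borel"
    using haar unfolding haar_prob_def by auto
  then show "sets (distr lam borel (\<lambda>h. h + g0)) = sets lam" by simp
  fix A assume "A \<in> sets (distr lam borel (\<lambda>h. h + g0))"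
  then have [measurable]: "A \<in> sets borel" by simp
  have "emeasure (distr lam borel (\<lambda>h. h + g0)) A
      = (\<integral>\<^sup>+y. indicator A y \<partial>distr lam borel (\<lambda>h. h + g0))"
    by (simp add: nn_integral_indicator)
  also have "\<dots> = (\<integral>\<^sup>+y. indicator A (y + g0) \<partial>lam)" by (rule nn_integral_distr) measurable
  also have "\<dots> = (\<integral>\<^sup>+y. indicator A (- y + g0) \<partial>lam)"
    by (rule haar_prob_nn_integral_uminus[OF haar]) measurable
  also have "\<dots> = (\<integral>\<^sup>+y. indicator A (- (g0 + y) + g0) \<partial>lam)"
    by (rule haar_prob_nn_integral_add_left[OF haar]) measurable
  also have "\<dots> = emeasure lam A"
    using haar_prob_nn_integral_uminus[OF haar, of "indicator A"]
    by (simp add: minus_add add.assoc nn_integral_indicator)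
  finally show "emeasure (distr lam borel (\<lambda>h. h + g0)) A = emeasure lam A" .
qed

lemma weighted_Cauchy_Schwarz_sum:
  fixes w c :: "'a \<Rightarrow> real"
  shows "(\<Sum>j\<in>I. w j * c j)\<^sup>2 \<le> (\<Sum>j\<in>I. \<bar>w j\<bar>) * (\<Sum>j\<in>I. \<bar>w j\<bar> * (c j)\<^sup>2)"
proof -
  have split: "sqrt \<bar>w j\<bar> * (sgn (w j) * sqrt \<bar>w j\<bar> * c j) = w j * c j" for j
    by (simp add: mult_ac real_sqrt_mult[symmetric] abs_mult_sgn)
  have square: "(sgn (w j) * sqrt \<bar>w j\<bar> * c j)\<^sup>2 = \<bar>w j\<bar> * (c j)\<^sup>2" for j
    by (cases "w j = 0") (auto simp: power_mult_distrib sgn_if)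
  show ?thesis
    using Cauchy_Schwarz_ineq_sum[of "\<lambda>j. sqrt \<bar>w j\<bar>" "\<lambda>j. sgn (w j) * sqrt \<bar>w j\<bar> * c j" I]
    unfolding split square by simp
qed

lemma (in prob_space) abs_integral_le_const:
  fixes f :: "'a \<Rightarrow> real"
  assumes "\<And>x. \<bar>f x\<bar> \<le> C"
  shows "\<bar>\<integral>x. f x \<partial>M\<bar> \<le> C"
proof -
  have "\<bar>\<integral>x. f x \<partial>M\<bar> \<le> (\<integral>x. \<bar>f x\<bar> \<partial>M)" by (rule integral_abs_bound)
  also have "\<dots> \<le> C"
  proof (cases "integrable M (\<lambda>x. \<bar>f x\<bar>)")
    case True then show ?thesis using assms by (intro integral_le_const) auto
  next
    case False then show ?thesis using assms[of undefined] by (simp add: not_integrable_integral_eq)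
  qed
  finally show ?thesis .
qed

lemma (in finite_measure) integrable_abs_le_const:
  fixes f :: "'a \<Rightarrow> real"
  assumes "f \<in> borel_measurable M" "\<And>x. \<bar>f x\<bar> \<le> C"
  shows "integrable M f"
  using assms by (intro integrable_const_bound[where B=C]) auto

lemma integrable_bounded_mult:
  fixes f g :: "'a \<Rightarrow> real"
  assumes "integrable M g" "f \<in> borel_measurable M" "\<And>x. \<bar>f x\<bar> \<le> C"
  shows "integrable M (\<lambda>x. f x * g x)"
proof (rule Bochner_Integration.integrable_bound[where f="\<lambda>x. C * \<bar>g x\<bar>"])
  show "integrable M (\<lambda>x. C * \<bar>g x\<bar>)" using assms(1) by simp
  show "(\<lambda>x. f x * g x) \<in> borel_measurable M" using assms(1,2) by measurable
  have "\<bar>f x\<bar> * \<bar>g x\<bar> \<le> \<bar>C\<bar> * \<bar>g x\<bar>" for x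
    using assms(3)[of x] by (intro mult_right_mono) auto
  then show "AE x in M. norm (f x * g x) \<le> norm (C * \<bar>g x\<bar>)" by (simp add: abs_mult)
qed

lemma integrable_mult_square_integrable:
  fixes f g :: "'a \<Rightarrow> real"
  assumes "integrable M (\<lambda>x. (f x)\<^sup>2)" "integrable M (\<lambda>x. (g x)\<^sup>2)"
    and "f \<in> borel_measurable M" "g \<in> borel_measurable M"
  shows "integrable M (\<lambda>x. f x * g x)"
proof (rule Bochner_Integration.integrable_bound[where f="\<lambda>x. (f x)\<^sup>2 + (g x)\<^sup>2"])
  show "integrable M (\<lambda>x. (f x)\<^sup>2 + (g x)\<^sup>2)" using assms(1,2) by simp
  show "(\<lambda>x. f x * g x) \<in> borel_measurable M" using assms(3,4) by measurable
  have "\<bar>f x\<bar> * \<bar>g x\<bar> \<le> (f x)\<^sup>2 + (g x)\<^sup>2" for x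
  proof -
    have "2 * (\<bar>f x\<bar> * \<bar>g x\<bar>) \<le> (f x)\<^sup>2 + (g x)\<^sup>2"
      using sum_squares_bound[of "\<bar>f x\<bar>" "\<bar>g x\<bar>"] by (simp add: mult.assoc)
    moreover have "0 \<le> \<bar>f x\<bar> * \<bar>g x\<bar>" by simp
    ultimately show ?thesis by linarith
  qed
  then show "AE x in M. norm (f x * g x) \<le> norm ((f x)\<^sup>2 + (g x)\<^sup>2)" by (simp add: abs_mult)
qed

lemma (in finite_measure) integrable_power2_diff_bounded:
  fixes f g :: "'a \<Rightarrow> real"
  assumes [measurable]: "f \<in> borel_measurable M" "g \<in> borel_measurable M"
    and f_bdd: "\<And>x. \<bar>f x\<bar> \<le> C" and g_L2: "integrable M (\<lambda>x. (g x)\<^sup>2)"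
  shows "integrable M (\<lambda>x. (f x - g x)\<^sup>2)"
proof -
  have "\<bar>(f x)\<^sup>2\<bar> \<le> C\<^sup>2" for x
    using power_mono[OF f_bdd[of x] abs_ge_zero[of "f x"], of 2] by simp
  then have f_L2: "integrable M (\<lambda>x. (f x)\<^sup>2)"
    by (intro integrable_abs_le_const) measurable
  moreover have "integrable M (\<lambda>x. f x * g x)"
    by (rule integrable_mult_square_integrable[OF f_L2 g_L2]) measurable
  moreover have "(f x - g x)\<^sup>2 = ((f x)\<^sup>2 - 2 * (f x * g x)) + (g x)\<^sup>2" for x
    by (simp add: power2_diff)
  ultimately show ?thesis using g_L2 by simp
qed

lemma integral_power2_diff:
  fixes a b :: "'a \<Rightarrow> real"
  assumes "integrable M (\<lambda>x. (a x)\<^sup>2)" "integrable M (\<lambda>x. (b x)\<^sup>2)" "integrable M (\<lambda>x. a x * b x)"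
  shows "(\<integral>x. (a x - b x)\<^sup>2 \<partial>M) = (\<integral>x. (a x)\<^sup>2 \<partial>M) - 2 * (\<integral>x. a x * b x \<partial>M) + (\<integral>x. (b x)\<^sup>2 \<partial>M)"
proof -
  have "(\<integral>x. (a x - b x)\<^sup>2 \<partial>M) = (\<integral>x. ((a x)\<^sup>2 - 2 * (a x * b x)) + (b x)\<^sup>2 \<partial>M)"
    by (rule Bochner_Integration.integral_cong) (auto simp: power2_diff)
  also have "\<dots> = (\<integral>x. (a x)\<^sup>2 \<partial>M) - 2 * (\<integral>x. a x * b x \<partial>M) + (\<integral>x. (b x)\<^sup>2 \<partial>M)"
    using assms by simp
  finally show ?thesis .
qed

lemma L2_norm_sq2_nonneg: "0 \<le> L2_norm_sq2 M j"
  unfolding L2_norm_sq2_def by (intro integral_nonneg_AE AE_I2 integral_nonneg_AE) simp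

lemma nn_integral_ge_integral_add_const:
  fixes f g h :: "'a \<Rightarrow> real"
  assumes "integrable M g" "\<And>\<omega>. 0 \<le> g \<omega>" "integrable M h" "\<And>\<omega>. 0 \<le> h \<omega>"
    and "\<And>\<omega>. \<omega> \<in> space M \<Longrightarrow> h \<omega> \<le> f \<omega>"
    and "(\<integral>\<omega>. g \<omega> \<partial>M) + c \<le> (\<integral>\<omega>. h \<omega> \<partial>M)" and "0 \<le> c"
  shows "(\<integral>\<^sup>+\<omega>. ennreal (g \<omega>) \<partial>M) + ennreal c \<le> (\<integral>\<^sup>+\<omega>. ennreal (f \<omega>) \<partial>M)"
proof -
  have "(\<integral>\<^sup>+\<omega>. ennreal (g \<omega>) \<partial>M) + ennreal c = ennreal ((\<integral>\<omega>. g \<omega> \<partial>M) + c)"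
    using assms(1,2,7) by (simp add: nn_integral_eq_integral ennreal_plus integral_nonneg_AE)
  also have "\<dots> \<le> ennreal (\<integral>\<omega>. h \<omega> \<partial>M)" using assms(6) by (rule ennreal_leI)
  also have "\<dots> = (\<integral>\<^sup>+\<omega>. ennreal (h \<omega>) \<partial>M)"
    using assms(3,4) by (simp add: nn_integral_eq_integral)
  also have "\<dots> \<le> (\<integral>\<^sup>+\<omega>. ennreal (f \<omega>) \<partial>M)"
    using assms(5) by (intro nn_integral_mono ennreal_leI)
  finally show ?thesis .
qed

section \<open>Noise with conditional covariance \<open>\<sigma>\<^sup>2I\<close>\<close>

lemma (in sigma_finite_subalgebra) integral_mult_cond_exp_const:
  assumes "integrable M (\<lambda>x. f x * g x)" "f \<in> borel_measurable F" "g \<in> borel_measurable M"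
    and "AE x in M. real_cond_exp M F g x = c"
  shows "(\<integral>x. f x * g x \<partial>M) = c * (\<integral>x. f x \<partial>M)"
proof -
  have [measurable]: "f \<in> borel_measurable M" by (rule measurable_from_subalg[OF subalg assms(2)])
  have "(\<integral>x. f x * g x \<partial>M) = (\<integral>x. f x * real_cond_exp M F g x \<partial>M)"
    using real_cond_exp_intg(2)[OF assms(1-3)] by simp
  also have "\<dots> = (\<integral>x. c * f x \<partial>M)"
    by (rule integral_cong_AE) (use assms(4) in auto)
  finally show ?thesis by simp
qed

lemma sigma_finite_subalgebra_vimage_algebra:
  assumes "prob_space M" "f \<in> M \<rightarrow>\<^sub>M N"
  shows "sigma_finite_subalgebra M (vimage_algebra (space M) f N)"
proof (rule finite_measure_subalgebra_is_sigma_finite)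
  have "subalgebra M (vimage_algebra (space M) f N)"
    unfolding subalgebra_def using measurable_iff_sets[of f M N] assms(2) by simp
  then show "finite_measure_subalgebra M (vimage_algebra (space M) f N)"
    using assms(1) by (simp add: finite_measure_subalgebra_def finite_measure_subalgebra_axioms_def
        prob_space_def)
qed

lemma measurable_sample:
  "(\<And>i. X i \<in> M \<rightarrow>\<^sub>M N) \<Longrightarrow> (\<lambda>\<omega> i. X i \<omega>) \<in> M \<rightarrow>\<^sub>M PiM UNIV (\<lambda>_. N)"
  using measurable_restrict[where I=UNIV and X=X and N=M and M="\<lambda>_. N"] by (simp add: restrict_UNIV)

lemma sample_subalgebra:
  fixes M :: "'a measure" and N :: "'b measure" and X :: "'i \<Rightarrow> 'a \<Rightarrow> 'b"
  assumes G_def: "G = vimage_algebra (space M) (\<lambda>\<omega>. \<lambda>i\<in>UNIV. X i \<omega>) (PiM UNIV (\<lambda>_. N))"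
    and "prob_space M" and "\<And>i. X i \<in> M \<rightarrow>\<^sub>M N"
  shows "sigma_finite_subalgebra M G"
    and "(\<lambda>\<omega> i. X i \<omega>) \<in> G \<rightarrow>\<^sub>M PiM UNIV (\<lambda>_. N)"
    and "X i \<in> G \<rightarrow>\<^sub>M N"
proof -
  have sample: "(\<lambda>\<omega>. \<lambda>i\<in>UNIV. X i \<omega>) \<in> M \<rightarrow>\<^sub>M PiM UNIV (\<lambda>_. N)"
    using assms(3) by measurable
  show "sigma_finite_subalgebra M G"
    unfolding G_def by (rule sigma_finite_subalgebra_vimage_algebra[OF assms(2) sample])
  have "(\<lambda>\<omega>. \<lambda>i\<in>UNIV. X i \<omega>) \<in> G \<rightarrow>\<^sub>M PiM UNIV (\<lambda>_. N)"
    unfolding G_def using measurable_space[OF sample] by (intro measurable_vimage_algebra1 Pi_I)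
  then show "(\<lambda>\<omega> i. X i \<omega>) \<in> G \<rightarrow>\<^sub>M PiM UNIV (\<lambda>_. N)"
    and "X i \<in> G \<rightarrow>\<^sub>M N"
    using measurable_compose[OF _ measurable_component_singleton[of i UNIV]] by (simp_all add: restrict_UNIV)
qed

lemma (in sigma_finite_subalgebra) integral_noisy_product:
  fixes f1 f2 \<xi>1 \<xi>2 d :: "'a \<Rightarrow> real"
  assumes [measurable]: "f1 \<in> borel_measurable F" "f2 \<in> borel_measurable F" "d \<in> borel_measurable F"
    and [measurable]: "\<xi>1 \<in> borel_measurable M" "\<xi>2 \<in> borel_measurable M"
    and f1_L2: "integrable M (\<lambda>\<omega>. (f1 \<omega>)\<^sup>2)" and f2_L2: "integrable M (\<lambda>\<omega>. (f2 \<omega>)\<^sup>2)"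
    and \<xi>1_L2: "integrable M (\<lambda>\<omega>. (\<xi>1 \<omega>)\<^sup>2)" and \<xi>2_L2: "integrable M (\<lambda>\<omega>. (\<xi>2 \<omega>)\<^sup>2)"
    and d_bdd: "\<And>\<omega>. \<bar>d \<omega>\<bar> \<le> C"
    and mean1: "AE \<omega> in M. real_cond_exp M F \<xi>1 \<omega> = 0"
    and mean2: "AE \<omega> in M. real_cond_exp M F \<xi>2 \<omega> = 0"
    and cov: "AE \<omega> in M. real_cond_exp M F (\<lambda>\<omega>. \<xi>1 \<omega> * \<xi>2 \<omega>) \<omega> = c"
  shows "integrable M (\<lambda>\<omega>. f1 \<omega> * f2 \<omega> * d \<omega>)"
    and "integrable M (\<lambda>\<omega>. (f1 \<omega> + \<xi>1 \<omega>) * (f2 \<omega> + \<xi>2 \<omega>) * d \<omega>)"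
    and "(\<integral>\<omega>. (f1 \<omega> + \<xi>1 \<omega>) * (f2 \<omega> + \<xi>2 \<omega>) * d \<omega> \<partial>M)
       = (\<integral>\<omega>. f1 \<omega> * f2 \<omega> * d \<omega> \<partial>M) + c * (\<integral>\<omega>. d \<omega> \<partial>M)"
proof -
  have [measurable]: "f1 \<in> borel_measurable M" "f2 \<in> borel_measurable M" "d \<in> borel_measurable M"
    by (rule measurable_from_subalg[OF subalg], measurable)+
  have d_mult: "integrable M (\<lambda>\<omega>. d \<omega> * (a \<omega> * b \<omega>))"
    if "integrable M (\<lambda>\<omega>. (a \<omega>)\<^sup>2)" "integrable M (\<lambda>\<omega>. (b \<omega>)\<^sup>2)"
      "a \<in> borel_measurable M" "b \<in> borel_measurable M" for a b
    by (rule integrable_bounded_mult[OF integrable_mult_square_integrable[OF that] _ d_bdd]) measurable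
  have ff: "integrable M (\<lambda>\<omega>. f1 \<omega> * f2 \<omega> * d \<omega>)"
    using d_mult[OF f1_L2 f2_L2] by (simp add: mult_ac)
  have f\<xi>: "integrable M (\<lambda>\<omega>. (f1 \<omega> * d \<omega>) * \<xi>2 \<omega>)"
    using d_mult[OF f1_L2 \<xi>2_L2] by (simp add: mult_ac)
  have \<xi>f: "integrable M (\<lambda>\<omega>. (f2 \<omega> * d \<omega>) * \<xi>1 \<omega>)"
    using d_mult[OF f2_L2 \<xi>1_L2] by (simp add: mult_ac)
  have \<xi>\<xi>: "integrable M (\<lambda>\<omega>. d \<omega> * (\<xi>1 \<omega> * \<xi>2 \<omega>))"
    using d_mult[OF \<xi>1_L2 \<xi>2_L2] by simp
  have expand: "(f1 \<omega> + \<xi>1 \<omega>) * (f2 \<omega> + \<xi>2 \<omega>) * d \<omega> = f1 \<omega> * f2 \<omega> * d \<omega>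
      + (f1 \<omega> * d \<omega>) * \<xi>2 \<omega> + (f2 \<omega> * d \<omega>) * \<xi>1 \<omega> + d \<omega> * (\<xi>1 \<omega> * \<xi>2 \<omega>)" for \<omega>
    by (simp add: algebra_simps)
  have "(\<integral>\<omega>. (f1 \<omega> * d \<omega>) * \<xi>2 \<omega> \<partial>M) = 0" "(\<integral>\<omega>. (f2 \<omega> * d \<omega>) * \<xi>1 \<omega> \<partial>M) = 0"
    using integral_mult_cond_exp_const[OF f\<xi> _ _ mean2] integral_mult_cond_exp_const[OF \<xi>f _ _ mean1]
    by simp_all
  moreover have "(\<integral>\<omega>. d \<omega> * (\<xi>1 \<omega> * \<xi>2 \<omega>) \<partial>M) = c * (\<integral>\<omega>. d \<omega> \<partial>M)"
    by (rule integral_mult_cond_exp_const[OF \<xi>\<xi> _ _ cov]) measurable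
  ultimately show "(\<integral>\<omega>. (f1 \<omega> + \<xi>1 \<omega>) * (f2 \<omega> + \<xi>2 \<omega>) * d \<omega> \<partial>M)
       = (\<integral>\<omega>. f1 \<omega> * f2 \<omega> * d \<omega> \<partial>M) + c * (\<integral>\<omega>. d \<omega> \<partial>M)"
    unfolding expand using ff f\<xi> \<xi>f \<xi>\<xi> by simp
  show "integrable M (\<lambda>\<omega>. (f1 \<omega> + \<xi>1 \<omega>) * (f2 \<omega> + \<xi>2 \<omega>) * d \<omega>)"
    unfolding expand using ff f\<xi> \<xi>f \<xi>\<xi> by simp
  show "integrable M (\<lambda>\<omega>. f1 \<omega> * f2 \<omega> * d \<omega>)" by (fact ff)
qed

lemma (in sigma_finite_subalgebra) integral_noisy_quadratic_form:
  fixes f \<xi> :: "'n::finite \<Rightarrow> 'a \<Rightarrow> real" and D :: "'a \<Rightarrow> 'n \<Rightarrow> 'n \<Rightarrow> real"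
  assumes "\<And>i. f i \<in> borel_measurable F" "\<And>i. integrable M (\<lambda>\<omega>. (f i \<omega>)\<^sup>2)"
    and "\<And>i. \<xi> i \<in> borel_measurable M" "\<And>i. integrable M (\<lambda>\<omega>. (\<xi> i \<omega>)\<^sup>2)"
    and "\<And>i j. (\<lambda>\<omega>. D \<omega> i j) \<in> borel_measurable F" "\<And>\<omega> i j. \<bar>D \<omega> i j\<bar> \<le> C"
    and "\<And>i. AE \<omega> in M. real_cond_exp M F (\<xi> i) \<omega> = 0"
    and "\<And>i j. AE \<omega> in M. real_cond_exp M F (\<lambda>\<omega>. \<xi> i \<omega> * \<xi> j \<omega>) \<omega> = (if i = j then \<sigma>\<^sup>2 else 0)"
  shows "integrable M (\<lambda>\<omega>. \<Sum>i\<in>UNIV. \<Sum>j\<in>UNIV. f i \<omega> * f j \<omega> * D \<omega> i j)"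
    and "integrable M (\<lambda>\<omega>. \<Sum>i\<in>UNIV. \<Sum>j\<in>UNIV. (f i \<omega> + \<xi> i \<omega>) * (f j \<omega> + \<xi> j \<omega>) * D \<omega> i j)"
    and "(\<integral>\<omega>. (\<Sum>i\<in>UNIV. \<Sum>j\<in>UNIV. (f i \<omega> + \<xi> i \<omega>) * (f j \<omega> + \<xi> j \<omega>) * D \<omega> i j) \<partial>M)
       = (\<integral>\<omega>. (\<Sum>i\<in>UNIV. \<Sum>j\<in>UNIV. f i \<omega> * f j \<omega> * D \<omega> i j) \<partial>M)
         + \<sigma>\<^sup>2 * (\<Sum>i\<in>UNIV. \<integral>\<omega>. D \<omega> i i \<partial>M)"
proof -
  note entry = integral_noisy_product[OF assms(1,1,5,3,3,2,2,4,4,6,7,7,8)]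
  show "integrable M (\<lambda>\<omega>. \<Sum>i\<in>UNIV. \<Sum>j\<in>UNIV. f i \<omega> * f j \<omega> * D \<omega> i j)"
    and "integrable M (\<lambda>\<omega>. \<Sum>i\<in>UNIV. \<Sum>j\<in>UNIV. (f i \<omega> + \<xi> i \<omega>) * (f j \<omega> + \<xi> j \<omega>) * D \<omega> i j)"
    using entry(1,2) by auto
  have "(\<Sum>i\<in>UNIV. \<Sum>j\<in>UNIV. (if i = j then \<sigma>\<^sup>2 else 0) * (\<integral>\<omega>. D \<omega> i j \<partial>M))
      = \<sigma>\<^sup>2 * (\<Sum>i\<in>UNIV. \<integral>\<omega>. D \<omega> i i \<partial>M)"
    by (simp add: if_distrib[of "\<lambda>c. c * _"] sum_distrib_left cong: if_cong)
  then show "(\<integral>\<omega>. (\<Sum>i\<in>UNIV. \<Sum>j\<in>UNIV. (f i \<omega> + \<xi> i \<omega>) * (f j \<omega> + \<xi> j \<omega>) * D \<omega> i j) \<partial>M)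
       = (\<integral>\<omega>. (\<Sum>i\<in>UNIV. \<Sum>j\<in>UNIV. f i \<omega> * f j \<omega> * D \<omega> i j) \<partial>M)
         + \<sigma>\<^sup>2 * (\<Sum>i\<in>UNIV. \<integral>\<omega>. D \<omega> i i \<partial>M)"
    using entry by (simp add: sum.distrib)
qed

lemma risk_eq_L2_norm_sq_add:
  fixes Q :: "'q measure" and mu :: "'x::topological_space measure"
  assumes Q: "prob_space Q" and [measurable]: "Xt \<in> Q \<rightarrow>\<^sub>M borel" "\<xi>t \<in> borel_measurable Q"
    and Xt_distr: "distr Q borel Xt = mu" and \<xi>t_L2: "integrable Q (\<lambda>q. (\<xi>t q)\<^sup>2)"
    and noise_mean: "AE q in Q. real_cond_exp Q (vimage_algebra (space Q) Xt borel) \<xi>t q = 0"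
    and noise_var: "(\<integral>q. (\<xi>t q)\<^sup>2 \<partial>Q) = \<sigma>\<^sup>2"
    and [measurable]: "h \<in> borel_measurable borel" "fs \<in> borel_measurable borel"
    and L2: "integrable mu (\<lambda>x. (h x - fs x)\<^sup>2)"
  shows "risk Q Xt \<xi>t fs h = L2_norm_sq mu (\<lambda>x. h x - fs x) + \<sigma>\<^sup>2"
proof -
  define u where "u = (\<lambda>x. h x - fs x)"
  define G where "G = vimage_algebra (space Q) Xt borel"
  interpret sigma_finite_subalgebra Q G
    unfolding G_def by (rule sigma_finite_subalgebra_vimage_algebra) fact+
  have [measurable]: "u \<in> borel_measurable borel" unfolding u_def by measurable
  have "Xt \<in> G \<rightarrow>\<^sub>M borel" unfolding G_def by (rule measurable_vimage_algebra1) simp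
  then have uX_G: "(\<lambda>q. u (Xt q)) \<in> borel_measurable G" by measurable
  have uX_L2: "integrable Q (\<lambda>q. (u (Xt q))\<^sup>2)"
    using integrable_distr_eq[of Xt Q borel "\<lambda>x. (u x)\<^sup>2"] L2 unfolding Xt_distr u_def by simp
  have uX_\<xi>t: "integrable Q (\<lambda>q. u (Xt q) * \<xi>t q)"
    by (rule integrable_mult_square_integrable[OF uX_L2 \<xi>t_L2]) measurable
  have "(\<integral>q. (u (Xt q))\<^sup>2 \<partial>Q) = L2_norm_sq mu u"
    unfolding L2_norm_sq_def Xt_distr[symmetric] by (rule integral_distr[symmetric]) measurable
  moreover have "(\<integral>q. u (Xt q) * \<xi>t q \<partial>Q) = 0"
    using integral_mult_cond_exp_const[OF uX_\<xi>t uX_G _ noise_mean[folded G_def]] by simp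
  moreover have "risk Q Xt \<xi>t fs h = (\<integral>q. (u (Xt q) - \<xi>t q)\<^sup>2 \<partial>Q)"
    unfolding risk_def u_def by (simp add: algebra_simps)
  ultimately show ?thesis
    using integral_power2_diff[OF uX_L2 \<xi>t_L2 uX_\<xi>t] noise_var by (simp add: u_def)
qed

section \<open>Kernel ridge regression and orbit averages\<close>

text \<open>\<open>krr_weight k \<rho> Xs j x\<close> is the \<open>j\<close>-th entry \<open>a\<^sub>j(x)\<close> of \<open>(K + \<rho>I)\<^sup>-\<^sup>1 k\<^sub>X(x)\<close>;
  \<open>perp_gram\<close> is the Gram matrix \<open>D\<close> in \<open>L\<^sub>2(\<mu>)\<close> of the components \<open>d\<^sub>j = (id - O) a\<^sub>j\<close>.\<close>

definition krr_weight :: "('x \<Rightarrow> 'x \<Rightarrow> real) \<Rightarrow> real \<Rightarrow> ('n::finite \<Rightarrow> 'x) \<Rightarrow> 'n \<Rightarrow> 'x \<Rightarrow> real" where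
  "krr_weight k \<rho> Xs j x = (\<Sum>i\<in>UNIV. k (Xs i) x * matrix_inv (reg_gram k \<rho> Xs) $ i $ j)"

definition krr_weight_perp :: "'g measure \<Rightarrow> ('g \<Rightarrow> 'x \<Rightarrow> 'x) \<Rightarrow> ('x \<Rightarrow> 'x \<Rightarrow> real) \<Rightarrow> real \<Rightarrow>
    ('n::finite \<Rightarrow> 'x) \<Rightarrow> 'n \<Rightarrow> 'x \<Rightarrow> real" where
  "krr_weight_perp lam act k \<rho> Xs j x =
     krr_weight k \<rho> Xs j x - orbit_avg lam act (krr_weight k \<rho> Xs j) x"

definition perp_gram :: "'g measure \<Rightarrow> ('g \<Rightarrow> 'x \<Rightarrow> 'x) \<Rightarrow> 'x measure \<Rightarrow> ('x \<Rightarrow> 'x \<Rightarrow> real) \<Rightarrow> real \<Rightarrow>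
    ('n::finite \<Rightarrow> 'x) \<Rightarrow> 'n \<Rightarrow> 'n \<Rightarrow> real" where
  "perp_gram lam act mu k \<rho> Xs i j =
     (\<integral>x. krr_weight_perp lam act k \<rho> Xs i x * krr_weight_perp lam act k \<rho> Xs j x \<partial>mu)"

lemma krr_eq_sum_krr_weight: "krr k \<rho> Xs Y x = (\<Sum>j\<in>UNIV. krr_weight k \<rho> Xs j x * Y $ j)"
proof -
  define B where "B = matrix_inv (reg_gram k \<rho> Xs)"
  have "krr k \<rho> Xs Y x = (\<Sum>i\<in>UNIV. \<Sum>j\<in>UNIV. k (Xs i) x * B $ i $ j * Y $ j)"
    unfolding krr_def B_def reg_gram_def inner_vec_def matrix_vector_mult_def
    by (simp add: sum_distrib_left mult.assoc)
  also have "\<dots> = (\<Sum>j\<in>UNIV. (\<Sum>i\<in>UNIV. k (Xs i) x * B $ i $ j) * Y $ j)"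
    by (subst sum.swap) (simp add: sum_distrib_right)
  finally show ?thesis unfolding krr_weight_def B_def .
qed

locale krr_invariance =
  fixes lam :: "'g::{topological_group_add, second_countable_topology} measure"
    and act :: "'g \<Rightarrow> 'x::polish_space \<Rightarrow> 'x" and mu :: "'x measure"
    and k :: "'x \<Rightarrow> 'x \<Rightarrow> real" and rho :: real
  assumes haar: "haar_prob lam" and action: "measurable_action act"
    and mu_prob: "prob_space mu" and mu_borel: "sets mu = sets borel"
    and mu_inv: "\<And>g. distr mu borel (act g) = mu"
    and k_meas: "(\<lambda>(x, y). k x y) \<in> borel_measurable (borel \<Otimes>\<^sub>M borel)"
    and k_pd: "pd_kernel k" and k_bdd: "bdd_above (range (\<lambda>x. k x x))"
    and rho_pos: "rho > 0"
begin

lemma lam_prob: "prob_space lam"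
  using haar unfolding haar_prob_def by auto

lemma lam_sets [measurable_cong]: "sets lam = sets borel"
  using haar unfolding haar_prob_def by auto

lemmas mu_sets [measurable_cong] = mu_borel

lemma act_add: "act (g + h) x = act g (act h x)"
  using action unfolding measurable_action_def by auto

lemma measurable_act [measurable (raw)]:
  assumes "f \<in> M \<rightarrow>\<^sub>M borel" "g \<in> M \<rightarrow>\<^sub>M borel"
  shows "(\<lambda>z. act (f z) (g z)) \<in> M \<rightarrow>\<^sub>M borel"
proof -
  have "(\<lambda>(g, x). act g x) \<in> borel \<Otimes>\<^sub>M borel \<rightarrow>\<^sub>M (borel :: 'x measure)"
    using action unfolding measurable_action_def by auto
  from measurable_compose[OF _ this, of "\<lambda>z. (f z, g z)"] show ?thesis
    using assms by simp
qed

lemma measurable_k [measurable (raw)]: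
  assumes "f \<in> M \<rightarrow>\<^sub>M borel" "g \<in> M \<rightarrow>\<^sub>M borel"
  shows "(\<lambda>z. k (f z) (g z)) \<in> borel_measurable M"
  using measurable_compose[OF _ k_meas, of "\<lambda>z. (f z, g z)"] assms by simp

definition k_sup :: real where "k_sup = (SUP x. k x x)"

lemma abs_k_le: "\<bar>k x y\<bar> \<le> k_sup"
  using k_bdd unfolding k_sup_def by (intro pd_kernel_abs_le[OF k_pd] cSUP_upper) auto

lemma k_sup_nonneg: "0 \<le> k_sup"
  using abs_k_le[of undefined undefined] by linarith

lemma abs_integral_lam_le: "(\<And>g. \<bar>f g\<bar> \<le> (C::real)) \<Longrightarrow> \<bar>\<integral>g. f g \<partial>lam\<bar> \<le> C"
  by (rule prob_space.abs_integral_le_const[OF lam_prob])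

lemma abs_integral_mu_le: "(\<And>x. \<bar>f x\<bar> \<le> (C::real)) \<Longrightarrow> \<bar>\<integral>x. f x \<partial>mu\<bar> \<le> C"
  by (rule prob_space.abs_integral_le_const[OF mu_prob])

lemma integrable_lam_abs_le: "f \<in> borel_measurable lam \<Longrightarrow> (\<And>g. \<bar>f g\<bar> \<le> (C::real)) \<Longrightarrow> integrable lam f"
  using lam_prob by (intro finite_measure.integrable_abs_le_const) (auto simp: prob_space_def)

lemma integrable_mu_abs_le: "f \<in> borel_measurable mu \<Longrightarrow> (\<And>x. \<bar>f x\<bar> \<le> (C::real)) \<Longrightarrow> integrable mu f"
  using mu_prob by (intro finite_measure.integrable_abs_le_const) (auto simp: prob_space_def)

lemma measurable_orbit_avg [measurable]:
  assumes [measurable]: "h \<in> borel_measurable borel"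
  shows "orbit_avg lam act h \<in> borel_measurable borel"
proof -
  interpret L: prob_space lam by (rule lam_prob)
  have "(\<lambda>(x, g). h (act g x)) \<in> borel_measurable (borel \<Otimes>\<^sub>M lam)" by measurable
  then show ?thesis unfolding orbit_avg_def
    by (rule L.borel_measurable_lebesgue_integral[where f="\<lambda>x g. h (act g x)"])
qed

lemma orbit_avg_act:
  assumes [measurable]: "h \<in> borel_measurable borel"
  shows "orbit_avg lam act h (act g' x) = orbit_avg lam act h x"
proof -
  have "orbit_avg lam act h (act g' x) = (\<integral>g. h (act (g + g') x) \<partial>lam)"
    unfolding orbit_avg_def by (simp add: act_add)
  also have "\<dots> = (\<integral>g. h (act g x) \<partial>distr lam borel (\<lambda>g. g + g'))"
    by (rule integral_distr[symmetric]) measurable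
  also have "\<dots> = orbit_avg lam act h x"
    unfolding orbit_avg_def haar_prob_right_invariant[OF haar] ..
  finally show ?thesis .
qed

lemma abs_orbit_avg_le: "(\<And>x. \<bar>h x\<bar> \<le> (C::real)) \<Longrightarrow> \<bar>orbit_avg lam act h x\<bar> \<le> C"
  unfolding orbit_avg_def by (rule abs_integral_lam_le)

lemma orbit_avg_sum:
  assumes "\<And>j. integrable lam (\<lambda>g. f j (act g x))"
  shows "orbit_avg lam act (\<lambda>y. \<Sum>j\<in>(UNIV::'n::finite set). f j y * c j) x
       = (\<Sum>j\<in>UNIV. orbit_avg lam act (f j) x * c j)"
  unfolding orbit_avg_def using assms by simp

text \<open>Self-adjointness of orbit averaging, by Fubini and the invariance of \<open>\<mu>\<close> and \<open>u\<close>.\<close>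

lemma integral_orbit_avg_mult_invariant:
  assumes [measurable]: "h \<in> borel_measurable borel" and h_bdd: "\<And>x. \<bar>h x\<bar> \<le> C"
    and [measurable]: "u \<in> borel_measurable borel" and u_L2: "integrable mu (\<lambda>x. (u x)\<^sup>2)"
    and u_inv: "\<And>g. AE x in mu. u (act g x) = u x"
  shows "(\<integral>x. orbit_avg lam act h x * u x \<partial>mu) = (\<integral>x. h x * u x \<partial>mu)"
proof -
  interpret L: prob_space lam by (rule lam_prob)
  interpret pair_sigma_finite mu lam
    by (simp add: pair_sigma_finite_def prob_space_imp_sigma_finite lam_prob mu_prob)
  have u_L1: "integrable mu u"
    using mu_prob u_L2 by (auto simp: prob_space_def intro: finite_measure.square_integrable_imp_integrable)
  have "integrable (mu \<Otimes>\<^sub>M lam) (\<lambda>(x, g). h (act g x) * u x)"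
  proof (rule Fubini_integrable)
    have "(\<lambda>(x, g). \<bar>h (act g x)\<bar>) \<in> borel_measurable (mu \<Otimes>\<^sub>M lam)" by measurable
    then have "(\<lambda>x. \<integral>g. \<bar>h (act g x)\<bar> \<partial>lam) \<in> borel_measurable mu"
      by (rule L.borel_measurable_lebesgue_integral[where f="\<lambda>x g. \<bar>h (act g x)\<bar>"])
    then have "integrable mu (\<lambda>x. (\<integral>g. \<bar>h (act g x)\<bar> \<partial>lam) * \<bar>u x\<bar>)"
      using u_L1 by (intro integrable_bounded_mult[where C=C] abs_integral_lam_le) (auto simp: h_bdd)
    then show "integrable mu (\<lambda>x. \<integral>g. norm (case (x, g) of (x, g) \<Rightarrow> h (act g x) * u x) \<partial>lam)"
      by (simp add: abs_mult)
    have "integrable lam (\<lambda>g. h (act g x))" for x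
      by (rule integrable_lam_abs_le[OF _ h_bdd]) measurable
    then show "AE x in mu. integrable lam (\<lambda>g. case (x, g) of (x, g) \<Rightarrow> h (act g x) * u x)"
      by simp
  qed measurable
  then have "(\<integral>x. (\<integral>g. h (act g x) * u x \<partial>lam) \<partial>mu) = (\<integral>g. (\<integral>x. h (act g x) * u x \<partial>mu) \<partial>lam)"
    by (intro Fubini_integral[symmetric]) simp
  moreover have "(\<integral>x. h (act g x) * u x \<partial>mu) = (\<integral>x. h x * u x \<partial>mu)" for g
  proof -
    have "(\<integral>x. h (act g x) * u x \<partial>mu) = (\<integral>x. h (act g x) * u (act g x) \<partial>mu)"
      by (rule integral_cong_AE) (use u_inv[of g] in auto)
    also have "\<dots> = (\<integral>x. h x * u x \<partial>distr mu borel (act g))"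
      by (rule integral_distr[symmetric]) measurable
    finally show ?thesis by (simp only: mu_inv)
  qed
  ultimately show ?thesis
    unfolding orbit_avg_def by (simp add: L.prob_space)
qed

lemma L2_norm_sq_orbit_avg_pythagoras:
  assumes [measurable]: "h \<in> borel_measurable borel" and h_bdd: "\<And>x. \<bar>h x\<bar> \<le> C"
    and [measurable]: "fs \<in> borel_measurable borel" and fs_L2: "integrable mu (\<lambda>x. (fs x)\<^sup>2)"
    and fs_inv: "\<And>g. AE x in mu. fs (act g x) = fs x"
  shows "L2_norm_sq mu (\<lambda>x. h x - fs x) =
     L2_norm_sq mu (\<lambda>x. orbit_avg lam act h x - fs x) + L2_norm_sq mu (\<lambda>x. h x - orbit_avg lam act h x)"
proof -
  define oh where "oh = orbit_avg lam act h"
  have [measurable]: "oh \<in> borel_measurable borel" unfolding oh_def by measurable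
  have oh_bdd: "\<bar>oh x\<bar> \<le> C" for x unfolding oh_def by (rule abs_orbit_avg_le[OF h_bdd])
  have C: "0 \<le> C" using h_bdd[of undefined] by linarith
  have fs_L1: "integrable mu fs"
    using mu_prob fs_L2 by (auto simp: prob_space_def intro: finite_measure.square_integrable_imp_integrable)
  have bdd_prod: "\<bar>a x * b x\<bar> \<le> C * C" if "\<And>x. \<bar>a x\<bar> \<le> C" "\<And>x. \<bar>b x\<bar> \<le> C" for a b :: "'x \<Rightarrow> real" and x
    unfolding abs_mult using that C by (intro mult_mono) auto
  have h2: "integrable mu (\<lambda>x. (h x)\<^sup>2)" and oh2: "integrable mu (\<lambda>x. (oh x)\<^sup>2)"
    and h_oh: "integrable mu (\<lambda>x. h x * oh x)"
    unfolding power2_eq_square using bdd_prod h_bdd oh_bdd by (auto intro!: integrable_mu_abs_le)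
  have h_fs: "integrable mu (\<lambda>x. h x * fs x)" and oh_fs: "integrable mu (\<lambda>x. oh x * fs x)"
    using fs_L1 h_bdd oh_bdd by (auto intro!: integrable_bounded_mult[where C=C])
  have oh_inv: "AE x in mu. oh (act g x) = oh x" for g
    unfolding oh_def by (intro AE_I2 orbit_avg_act) measurable
  have "(\<integral>x. oh x * oh x \<partial>mu) = (\<integral>x. h x * oh x \<partial>mu)"
    using integral_orbit_avg_mult_invariant[OF _ h_bdd _ oh2 oh_inv] unfolding oh_def by simp
  moreover have "(\<integral>x. oh x * fs x \<partial>mu) = (\<integral>x. h x * fs x \<partial>mu)"
    using integral_orbit_avg_mult_invariant[OF _ h_bdd _ fs_L2 fs_inv] unfolding oh_def by simp
  ultimately show ?thesis
    unfolding L2_norm_sq_def oh_def[symmetric] integral_power2_diff[OF h2 fs_L2 h_fs]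
      integral_power2_diff[OF oh2 fs_L2 oh_fs] integral_power2_diff[OF h2 oh2 h_oh]
    by (simp add: power2_eq_square)
qed

lemma measurable_reg_gram_entry [measurable (raw)]:
  assumes "Xf \<in> M \<rightarrow>\<^sub>M PiM UNIV (\<lambda>_. borel)"
  shows "(\<lambda>z. reg_gram k rho (Xf z) $ r $ c) \<in> borel_measurable M"
proof -
  have [measurable]: "(\<lambda>z. Xf z i) \<in> M \<rightarrow>\<^sub>M borel" for i
    using measurable_compose[OF assms measurable_component_singleton, of i] by simp
  show ?thesis unfolding reg_gram_entry by measurable
qed

lemma measurable_reg_gram_inv_entry [measurable (raw)]:
  assumes "Xf \<in> M \<rightarrow>\<^sub>M PiM UNIV (\<lambda>_. borel)"
  shows "(\<lambda>z. matrix_inv (reg_gram k rho (Xf z)) $ i $ j) \<in> borel_measurable M"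
proof -
  have "(\<lambda>z. det (\<chi> r c. if c = i then axis j 1 $ r else reg_gram k rho (Xf z) $ r $ c))
      \<in> borel_measurable M"
  proof (rule borel_measurable_det)
    fix r c
    show "(\<lambda>z. (\<chi> r c. if c = i then axis j 1 $ r else reg_gram k rho (Xf z) $ r $ c) $ r $ c)
        \<in> borel_measurable M"
      using measurable_reg_gram_entry[OF assms, of r c] by (cases "c = i") simp_all
  qed
  moreover have "(\<lambda>z. det (reg_gram k rho (Xf z))) \<in> borel_measurable M"
    using measurable_reg_gram_entry[OF assms] by (rule borel_measurable_det)
  ultimately show ?thesis
    unfolding reg_gram_inv_entry_cramer[OF k_pd rho_pos] by measurable
qed

lemma measurable_krr_weight [measurable (raw)]:
  assumes "Xf \<in> M \<rightarrow>\<^sub>M PiM UNIV (\<lambda>_. borel)" "xf \<in> M \<rightarrow>\<^sub>M borel"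
  shows "(\<lambda>z. krr_weight k rho (Xf z) j (xf z)) \<in> borel_measurable M"
proof -
  have [measurable]: "(\<lambda>z. Xf z i) \<in> M \<rightarrow>\<^sub>M borel" for i
    using measurable_compose[OF assms(1) measurable_component_singleton, of i] by simp
  show ?thesis unfolding krr_weight_def using assms by measurable
qed

lemma measurable_orbit_avg_krr_weight [measurable (raw)]:
  assumes [measurable]: "Xf \<in> M \<rightarrow>\<^sub>M PiM UNIV (\<lambda>_. borel)" "xf \<in> M \<rightarrow>\<^sub>M borel"
  shows "(\<lambda>z. orbit_avg lam act (krr_weight k rho (Xf z) j) (xf z)) \<in> borel_measurable M"
proof -
  interpret L: prob_space lam by (rule lam_prob)
  have "(\<lambda>(z, g). krr_weight k rho (Xf z) j (act g (xf z))) \<in> borel_measurable (M \<Otimes>\<^sub>M lam)"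
    by measurable
  then show ?thesis unfolding orbit_avg_def
    by (rule L.borel_measurable_lebesgue_integral[where f="\<lambda>z g. krr_weight k rho (Xf z) j (act g (xf z))"])
qed

lemma measurable_krr_weight_perp [measurable (raw)]:
  assumes [measurable]: "Xf \<in> M \<rightarrow>\<^sub>M PiM UNIV (\<lambda>_. borel)" "xf \<in> M \<rightarrow>\<^sub>M borel"
  shows "(\<lambda>z. krr_weight_perp lam act k rho (Xf z) j (xf z)) \<in> borel_measurable M"
  unfolding krr_weight_perp_def by measurable

lemma measurable_perp_gram [measurable (raw)]:
  assumes [measurable]: "Xf \<in> M \<rightarrow>\<^sub>M PiM UNIV (\<lambda>_. borel)"
  shows "(\<lambda>z. perp_gram lam act mu k rho (Xf z) i j) \<in> borel_measurable M"
proof -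
  interpret U: prob_space mu by (rule mu_prob)
  have "(\<lambda>(z, x). krr_weight_perp lam act k rho (Xf z) i x * krr_weight_perp lam act k rho (Xf z) j x) \<in> borel_measurable (M \<Otimes>\<^sub>M mu)"
    by measurable
  then show ?thesis unfolding perp_gram_def
    by (rule U.borel_measurable_lebesgue_integral[where f="\<lambda>z x. krr_weight_perp lam act k rho (Xf z) i x * krr_weight_perp lam act k rho (Xf z) j x"])
qed

lemma measurable_kperp [measurable (raw)]:
  assumes [measurable]: "f \<in> M \<rightarrow>\<^sub>M borel" "g \<in> M \<rightarrow>\<^sub>M borel"
  shows "(\<lambda>z. kperp lam act k (f z) (g z)) \<in> borel_measurable M"
proof -
  interpret L: prob_space lam by (rule lam_prob)
  have "(\<lambda>(z, h). k (f z) (act h (g z))) \<in> borel_measurable (M \<Otimes>\<^sub>M lam)"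
    by measurable
  then have "(\<lambda>z. \<integral>h. k (f z) (act h (g z)) \<partial>lam) \<in> borel_measurable M"
    by (rule L.borel_measurable_lebesgue_integral[where f="\<lambda>z h. k (f z) (act h (g z))"])
  then show ?thesis unfolding kperp_def by measurable
qed

lemma measurable_const_sample [measurable]: "(\<lambda>z. Xs) \<in> M \<rightarrow>\<^sub>M PiM UNIV (\<lambda>_. borel)"
  by (rule measurable_const) (simp add: space_PiM)

lemma measurable_krr [measurable]: "krr k rho (Xs::'n::finite \<Rightarrow> _) Y \<in> borel_measurable borel"
proof -
  have "krr k rho Xs Y = (\<lambda>x. \<Sum>j\<in>UNIV. krr_weight k rho Xs j x * Y $ j)"
    by (simp add: fun_eq_iff krr_eq_sum_krr_weight)
  also have "\<dots> \<in> borel_measurable borel" by measurable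
  finally show ?thesis .
qed

lemma abs_krr_weight_le:
  "\<bar>krr_weight k rho (Xs::'n::finite \<Rightarrow> _) j x\<bar> \<le> real CARD('n) * k_sup / rho"
proof -
  have "\<bar>krr_weight k rho Xs j x\<bar> \<le> (\<Sum>i\<in>UNIV. \<bar>k (Xs i) x\<bar> * \<bar>matrix_inv (reg_gram k rho Xs) $ i $ j\<bar>)"
    unfolding krr_weight_def abs_mult[symmetric] by (rule sum_abs)
  also have "\<dots> \<le> (\<Sum>i\<in>(UNIV::'n set). k_sup * (1 / rho))"
    using abs_k_le abs_reg_gram_inv_entry_le[OF k_pd rho_pos] k_sup_nonneg
    by (intro sum_mono mult_mono) auto
  finally show ?thesis by simp
qed

lemma abs_krr_weight_perp_le:
  "\<bar>krr_weight_perp lam act k rho (Xs::'n::finite \<Rightarrow> _) j x\<bar> \<le> 2 * (real CARD('n) * k_sup / rho)"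
  using abs_krr_weight_le[of Xs j x] abs_orbit_avg_le[of "krr_weight k rho Xs j" _ x, OF abs_krr_weight_le]
  unfolding krr_weight_perp_def by linarith

lemma abs_mult_krr_weight_perp_le:
  "\<bar>krr_weight_perp lam act k rho (Xs::'n::finite \<Rightarrow> _) i x * krr_weight_perp lam act k rho Xs j x\<bar>
     \<le> (2 * (real CARD('n) * k_sup / rho))\<^sup>2"
  unfolding abs_mult power2_eq_square
  using abs_krr_weight_perp_le k_sup_nonneg rho_pos by (intro mult_mono) auto

lemma abs_perp_gram_le:
  "\<bar>perp_gram lam act mu k rho (Xs::'n::finite \<Rightarrow> _) i j\<bar> \<le> (2 * (real CARD('n) * k_sup / rho))\<^sup>2"
  unfolding perp_gram_def by (rule abs_integral_mu_le[OF abs_mult_krr_weight_perp_le])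

lemma abs_krr_le:
  "\<bar>krr k rho (Xs::'n::finite \<Rightarrow> _) Y x\<bar> \<le> (\<Sum>j\<in>UNIV. real CARD('n) * k_sup / rho * \<bar>Y $ j\<bar>)"
proof -
  have "\<bar>krr k rho Xs Y x\<bar> \<le> (\<Sum>j\<in>UNIV. \<bar>krr_weight k rho Xs j x\<bar> * \<bar>Y $ j\<bar>)"
    unfolding krr_eq_sum_krr_weight abs_mult[symmetric] by (rule sum_abs)
  also have "\<dots> \<le> (\<Sum>j\<in>UNIV. real CARD('n) * k_sup / rho * \<bar>Y $ j\<bar>)"
    by (intro sum_mono mult_right_mono abs_krr_weight_le) simp
  finally show ?thesis .
qed

lemma perp_gram_diag_nonneg: "0 \<le> perp_gram lam act mu k rho Xs j j"
  unfolding perp_gram_def by (rule integral_nonneg_AE) simp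

lemma integrable_mult_krr_weight_perp:
  "integrable mu (\<lambda>x. krr_weight_perp lam act k rho (Xs::'n::finite \<Rightarrow> _) i x * krr_weight_perp lam act k rho Xs j x)"
  by (rule integrable_mu_abs_le[OF _ abs_mult_krr_weight_perp_le]) measurable

lemma krr_minus_orbit_avg:
  "krr k rho (Xs::'n::finite \<Rightarrow> _) Y x - orbit_avg lam act (krr k rho Xs Y) x
     = (\<Sum>j\<in>UNIV. krr_weight_perp lam act k rho Xs j x * Y $ j)"
proof -
  have "integrable lam (\<lambda>g. krr_weight k rho Xs j (act g x))" for j
    by (rule integrable_lam_abs_le[OF _ abs_krr_weight_le]) measurable
  then have "orbit_avg lam act (krr k rho Xs Y) x
      = (\<Sum>j\<in>UNIV. orbit_avg lam act (krr_weight k rho Xs j) x * Y $ j)"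
    unfolding krr_eq_sum_krr_weight[abs_def] by (rule orbit_avg_sum)
  then show ?thesis
    by (simp add: krr_eq_sum_krr_weight krr_weight_perp_def sum_subtractf left_diff_distrib)
qed

lemma L2_norm_sq_krr_minus_orbit_avg:
  "L2_norm_sq mu (\<lambda>x. krr k rho (Xs::'n::finite \<Rightarrow> _) Y x - orbit_avg lam act (krr k rho Xs Y) x)
     = (\<Sum>i\<in>UNIV. \<Sum>j\<in>UNIV. Y $ i * Y $ j * perp_gram lam act mu k rho Xs i j)"
proof -
  have "(\<Sum>j\<in>UNIV. krr_weight_perp lam act k rho Xs j x * Y $ j)\<^sup>2 =
      (\<Sum>i\<in>UNIV. \<Sum>j\<in>UNIV. Y $ i * Y $ j *
         (krr_weight_perp lam act k rho Xs i x * krr_weight_perp lam act k rho Xs j x))" for x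
    unfolding power2_eq_square sum_product by (intro sum.cong refl) (simp add: mult_ac)
  then show ?thesis
    unfolding L2_norm_sq_def krr_minus_orbit_avg perp_gram_def
    by (simp add: integrable_mult_krr_weight_perp)
qed

lemma risk_krr_minus_risk_orbit_avg:
  fixes Q :: "'q measure"
  assumes "prob_space Q" "Xt \<in> Q \<rightarrow>\<^sub>M borel" "\<xi>t \<in> borel_measurable Q"
    and "distr Q borel Xt = mu" "integrable Q (\<lambda>q. (\<xi>t q)\<^sup>2)"
    and "AE q in Q. real_cond_exp Q (vimage_algebra (space Q) Xt borel) \<xi>t q = 0"
    and "(\<integral>q. (\<xi>t q)\<^sup>2 \<partial>Q) = \<sigma>\<^sup>2"
    and [measurable]: "fs \<in> borel_measurable borel" and fs_L2: "integrable mu (\<lambda>x. (fs x)\<^sup>2)"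
    and fs_inv: "\<And>g. AE x in mu. fs (act g x) = fs x"
  shows "risk Q Xt \<xi>t fs (krr k rho (Xs::'n::finite \<Rightarrow> _) Y)
       - risk Q Xt \<xi>t fs (orbit_avg lam act (krr k rho Xs Y))
     = (\<Sum>i\<in>UNIV. \<Sum>j\<in>UNIV. Y $ i * Y $ j * perp_gram lam act mu k rho Xs i j)"
proof -
  define h where "h = krr k rho Xs Y"
  define C where "C = (\<Sum>j\<in>UNIV. real CARD('n) * k_sup / rho * \<bar>Y $ j\<bar>)"
  have [measurable]: "h \<in> borel_measurable borel" unfolding h_def by measurable
  have h_bdd: "\<bar>h x\<bar> \<le> C" for x unfolding h_def C_def by (rule abs_krr_le)
  have oh_bdd: "\<bar>orbit_avg lam act h x\<bar> \<le> C" for x by (rule abs_orbit_avg_le[OF h_bdd])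
  have L2_diff: "integrable mu (\<lambda>x. (f x - fs x)\<^sup>2)"
    if "f \<in> borel_measurable borel" "\<And>x. \<bar>f x\<bar> \<le> C" for f
    using mu_prob that fs_L2
    by (intro finite_measure.integrable_power2_diff_bounded) (auto simp: prob_space_def)
  have "risk Q Xt \<xi>t fs h = L2_norm_sq mu (\<lambda>x. h x - fs x) + \<sigma>\<^sup>2"
    by (rule risk_eq_L2_norm_sq_add[OF assms(1-7)]) (simp_all add: L2_diff h_bdd)
  moreover have "risk Q Xt \<xi>t fs (orbit_avg lam act h)
      = L2_norm_sq mu (\<lambda>x. orbit_avg lam act h x - fs x) + \<sigma>\<^sup>2"
    by (rule risk_eq_L2_norm_sq_add[OF assms(1-7)]) (simp_all add: L2_diff oh_bdd)
  ultimately show ?thesis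
    using L2_norm_sq_orbit_avg_pythagoras[OF _ h_bdd _ fs_L2 fs_inv]
    unfolding h_def L2_norm_sq_krr_minus_orbit_avg[symmetric] by simp
qed

lemma sum_krr_weight_mult_reg_gram:
  "(\<Sum>j\<in>UNIV. krr_weight k rho (Xs::'n::finite \<Rightarrow> _) j y * reg_gram k rho Xs $ j $ l) = k (Xs l) y"
proof -
  define A where "A = reg_gram k rho Xs"
  have BA: "matrix_inv A ** A = mat 1"
    unfolding A_def by (rule matrix_inv_cancel(2)[OF invertible_reg_gram[OF k_pd rho_pos]])
  have "(\<Sum>j\<in>UNIV. krr_weight k rho Xs j y * A $ j $ l)
      = (\<Sum>i\<in>UNIV. k (Xs i) y * (\<Sum>j\<in>UNIV. matrix_inv A $ i $ j * A $ j $ l))"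
    unfolding krr_weight_def A_def[symmetric] sum_distrib_right sum_distrib_left
    by (subst sum.swap) (simp add: mult.assoc)
  also have "\<dots> = (\<Sum>i\<in>UNIV. k (Xs i) y * (if i = l then 1 else 0))"
    using BA by (simp add: matrix_matrix_mult_def mat_def vec_eq_iff)
  finally show ?thesis unfolding A_def by (simp add: if_distrib cong: if_cong)
qed

lemma sum_reg_gram_mult_krr_weight_perp:
  "(\<Sum>j\<in>UNIV. reg_gram k rho (Xs::'n::finite \<Rightarrow> _) $ j $ l * krr_weight_perp lam act k rho Xs j x)
     = kperp lam act k (Xs l) x"
proof -
  have "integrable lam (\<lambda>g. krr_weight k rho Xs j (act g x))" for j
    by (rule integrable_lam_abs_le[OF _ abs_krr_weight_le]) measurable
  then have "(\<Sum>j\<in>UNIV. orbit_avg lam act (krr_weight k rho Xs j) x * reg_gram k rho Xs $ j $ l)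
      = orbit_avg lam act (\<lambda>y. \<Sum>j\<in>UNIV. krr_weight k rho Xs j y * reg_gram k rho Xs $ j $ l) x"
    by (rule orbit_avg_sum[symmetric])
  then show ?thesis
    unfolding krr_weight_perp_def kperp_def sum_krr_weight_mult_reg_gram orbit_avg_def
    by (simp add: right_diff_distrib sum_subtractf mult.commute sum_krr_weight_mult_reg_gram)
qed

lemma sum_abs_reg_gram_le:
  shows "(\<Sum>j\<in>UNIV. \<bar>reg_gram k rho (Xs::'n::finite \<Rightarrow> _) $ j $ l\<bar>) \<le> real CARD('n) * k_sup + rho"
    and "(\<Sum>l\<in>UNIV. \<bar>reg_gram k rho (Xs::'n::finite \<Rightarrow> _) $ j $ l\<bar>) \<le> real CARD('n) * k_sup + rho"
proof -
  have entry: "\<bar>reg_gram k rho Xs $ j $ l\<bar> \<le> k_sup + (if j = l then rho else 0)" for j l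
    using abs_k_le[of "Xs j" "Xs l"] rho_pos unfolding reg_gram_entry by (auto simp: abs_le_iff)
  have "(\<Sum>j\<in>UNIV. \<bar>reg_gram k rho Xs $ j $ l\<bar>) \<le> (\<Sum>j\<in>(UNIV::'n set). k_sup + (if j = l then rho else 0))"
    by (rule sum_mono) (rule entry)
  then show "(\<Sum>j\<in>UNIV. \<bar>reg_gram k rho Xs $ j $ l\<bar>) \<le> real CARD('n) * k_sup + rho"
    by (simp add: sum.distrib)
  have "(\<Sum>l\<in>UNIV. \<bar>reg_gram k rho Xs $ j $ l\<bar>) \<le> (\<Sum>l\<in>(UNIV::'n set). k_sup + (if j = l then rho else 0))"
    by (rule sum_mono) (rule entry)
  then show "(\<Sum>l\<in>UNIV. \<bar>reg_gram k rho Xs $ j $ l\<bar>) \<le> real CARD('n) * k_sup + rho"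
    by (simp add: sum.distrib)
qed

lemma abs_kperp_le: "\<bar>kperp lam act k y x\<bar> \<le> 2 * k_sup"
  using abs_k_le[of y x] abs_integral_lam_le[of "\<lambda>g. k y (act g x)", OF abs_k_le]
  unfolding kperp_def by linarith

lemma integral_kperp_sq_le:
  "(\<integral>x. (kperp lam act k (Xs l) x)\<^sup>2 \<partial>mu)
     \<le> (real CARD('n) * k_sup + rho)
        * (\<Sum>j\<in>UNIV. \<bar>reg_gram k rho (Xs::'n::finite \<Rightarrow> _) $ j $ l\<bar> * perp_gram lam act mu k rho Xs j j)"
proof -
  define R where "R = real CARD('n) * k_sup + rho"
  let ?d = "krr_weight_perp lam act k rho Xs"
  have pointwise: "(kperp lam act k (Xs l) x)\<^sup>2 \<le> R * (\<Sum>j\<in>UNIV. \<bar>reg_gram k rho Xs $ j $ l\<bar> * (?d j x)\<^sup>2)" for x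
  proof -
    have "(kperp lam act k (Xs l) x)\<^sup>2 = (\<Sum>j\<in>UNIV. reg_gram k rho Xs $ j $ l * ?d j x)\<^sup>2"
      by (simp only: sum_reg_gram_mult_krr_weight_perp)
    also have "\<dots> \<le> (\<Sum>j\<in>UNIV. \<bar>reg_gram k rho Xs $ j $ l\<bar>) * (\<Sum>j\<in>UNIV. \<bar>reg_gram k rho Xs $ j $ l\<bar> * (?d j x)\<^sup>2)"
      by (rule weighted_Cauchy_Schwarz_sum)
    also have "\<dots> \<le> R * (\<Sum>j\<in>UNIV. \<bar>reg_gram k rho Xs $ j $ l\<bar> * (?d j x)\<^sup>2)"
      unfolding R_def by (intro mult_right_mono sum_abs_reg_gram_le sum_nonneg) simp
    finally show ?thesis .
  qed
  have "\<bar>(kperp lam act k (Xs l) x)\<^sup>2\<bar> \<le> (2 * k_sup)\<^sup>2" for x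
    using power_mono[OF abs_kperp_le[of "Xs l" x] abs_ge_zero, of 2] by simp
  then have "integrable mu (\<lambda>x. (kperp lam act k (Xs l) x)\<^sup>2)"
    by (intro integrable_mu_abs_le) measurable
  moreover have "integrable mu (\<lambda>x. (?d j x)\<^sup>2)" for j
    using integrable_mult_krr_weight_perp[of Xs j j] by (simp add: power2_eq_square)
  ultimately have "(\<integral>x. (kperp lam act k (Xs l) x)\<^sup>2 \<partial>mu)
      \<le> (\<integral>x. R * (\<Sum>j\<in>UNIV. \<bar>reg_gram k rho Xs $ j $ l\<bar> * (?d j x)\<^sup>2) \<partial>mu)"
    by (intro integral_mono pointwise) auto
  also have "\<dots> = R * (\<Sum>j\<in>UNIV. \<bar>reg_gram k rho Xs $ j $ l\<bar> * perp_gram lam act mu k rho Xs j j)"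
    using \<open>\<And>j. integrable mu (\<lambda>x. (?d j x)\<^sup>2)\<close>
    by (simp add: perp_gram_def power2_eq_square)
  finally show ?thesis unfolding R_def .
qed

lemma sum_integral_kperp_sq_le:
  "(\<Sum>l\<in>UNIV. \<integral>x. (kperp lam act k (Xs l) x)\<^sup>2 \<partial>mu)
     \<le> (real CARD('n) * k_sup + rho)\<^sup>2 * (\<Sum>j\<in>UNIV. perp_gram lam act mu k rho (Xs::'n::finite \<Rightarrow> _) j j)"
proof -
  define R where "R = real CARD('n) * k_sup + rho"
  have "(\<Sum>l\<in>UNIV. \<integral>x. (kperp lam act k (Xs l) x)\<^sup>2 \<partial>mu)
      \<le> (\<Sum>l\<in>UNIV. R * (\<Sum>j\<in>UNIV. \<bar>reg_gram k rho Xs $ j $ l\<bar> * perp_gram lam act mu k rho Xs j j))"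
    unfolding R_def by (intro sum_mono integral_kperp_sq_le)
  also have "\<dots> = R * (\<Sum>l\<in>UNIV. \<Sum>j\<in>UNIV. \<bar>reg_gram k rho Xs $ j $ l\<bar> * perp_gram lam act mu k rho Xs j j)"
    by (simp add: sum_distrib_left)
  also have "\<dots> = R * (\<Sum>j\<in>UNIV. perp_gram lam act mu k rho Xs j j * (\<Sum>l\<in>UNIV. \<bar>reg_gram k rho Xs $ j $ l\<bar>))"
    by (subst sum.swap) (simp add: sum_distrib_left mult.commute)
  also have "\<dots> \<le> R * (\<Sum>j\<in>UNIV. perp_gram lam act mu k rho Xs j j * R)"
    using k_sup_nonneg rho_pos unfolding R_def
    by (intro mult_left_mono sum_mono perp_gram_diag_nonneg sum_abs_reg_gram_le) simp_all
  finally show ?thesis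
    unfolding R_def by (simp add: power2_eq_square sum_distrib_left sum_distrib_right mult_ac)
qed

lemma perp_gram_quadratic_form_nonneg:
  "0 \<le> (\<Sum>i\<in>UNIV. \<Sum>j\<in>UNIV. Y $ i * Y $ j * perp_gram lam act mu k rho (Xs::'n::finite \<Rightarrow> _) i j)"
  unfolding L2_norm_sq_krr_minus_orbit_avg[symmetric] L2_norm_sq_def by simp

lemma expected_sum_integral_kperp_sq_le:
  fixes P :: "'w measure" and X :: "'n::finite \<Rightarrow> 'w \<Rightarrow> 'x"
  assumes P: "prob_space P" and [measurable]: "\<And>l. X l \<in> P \<rightarrow>\<^sub>M borel"
    and X_distr: "\<And>l. distr P borel (X l) = mu"
  shows "real CARD('n) * L2_norm_sq2 mu (kperp lam act k)
     \<le> (real CARD('n) * k_sup + rho)\<^sup>2 * (\<Sum>j\<in>UNIV. \<integral>\<omega>. perp_gram lam act mu k rho (\<lambda>i. X i \<omega>) j j \<partial>P)"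
proof -
  interpret P: prob_space P by (rule P)
  interpret U: prob_space mu by (rule mu_prob)
  define V where "V y = (\<integral>x. (kperp lam act k y x)\<^sup>2 \<partial>mu)" for y
  have [measurable]: "(\<lambda>\<omega> i. X i \<omega>) \<in> P \<rightarrow>\<^sub>M PiM UNIV (\<lambda>_. borel)"
    by (rule measurable_sample) measurable
  have "(\<lambda>(y, x). (kperp lam act k y x)\<^sup>2) \<in> borel_measurable (borel \<Otimes>\<^sub>M mu)" by measurable
  then have [measurable]: "V \<in> borel_measurable borel"
    unfolding V_def by (rule U.borel_measurable_lebesgue_integral[where f="\<lambda>y x. (kperp lam act k y x)\<^sup>2"])
  have "\<bar>(kperp lam act k y x)\<^sup>2\<bar> \<le> (2 * k_sup)\<^sup>2" for y x
    using power_mono[OF abs_kperp_le[of y x] abs_ge_zero, of 2] by simp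
  then have "\<bar>V y\<bar> \<le> (2 * k_sup)\<^sup>2" for y
    unfolding V_def by (rule abs_integral_mu_le)
  then have V_int: "integrable P (\<lambda>\<omega>. V (X l \<omega>))" for l
    by (intro P.integrable_abs_le_const) measurable
  have D_int: "integrable P (\<lambda>\<omega>. perp_gram lam act mu k rho (\<lambda>i. X i \<omega>) j j)" for j
    by (rule P.integrable_abs_le_const[OF _ abs_perp_gram_le]) measurable
  have "(\<integral>\<omega>. V (X l \<omega>) \<partial>P) = L2_norm_sq2 mu (kperp lam act k)" for l
    using integral_distr[of "X l" P borel V] unfolding X_distr L2_norm_sq2_def V_def by simp
  then have "real CARD('n) * L2_norm_sq2 mu (kperp lam act k) = (\<integral>\<omega>. (\<Sum>l\<in>UNIV. V (X l \<omega>)) \<partial>P)"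
    using V_int by simp
  also have "\<dots> \<le> (\<integral>\<omega>. (real CARD('n) * k_sup + rho)\<^sup>2
      * (\<Sum>j\<in>UNIV. perp_gram lam act mu k rho (\<lambda>i. X i \<omega>) j j) \<partial>P)"
    using V_int D_int sum_integral_kperp_sq_le unfolding V_def by (intro integral_mono) auto
  also have "\<dots> = (real CARD('n) * k_sup + rho)\<^sup>2
      * (\<Sum>j\<in>UNIV. \<integral>\<omega>. perp_gram lam act mu k rho (\<lambda>i. X i \<omega>) j j \<partial>P)"
    using D_int by simp
  finally show ?thesis .
qed

lemma L2_norm_sq2_kperp_le:
  fixes P :: "'w measure" and X :: "'n::finite \<Rightarrow> 'w \<Rightarrow> 'x"
  assumes "prob_space P" "\<And>l. X l \<in> P \<rightarrow>\<^sub>M borel" "\<And>l. distr P borel (X l) = mu"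
  shows "L2_norm_sq2 mu (kperp lam act k) / (sqrt (real CARD('n)) * k_sup + rho / sqrt (real CARD('n)))\<^sup>2
     \<le> (\<Sum>j\<in>UNIV. \<integral>\<omega>. perp_gram lam act mu k rho (\<lambda>i. X i \<omega>) j j \<partial>P)"
proof -
  define n where "n = real CARD('n)"
  define R where "R = n * k_sup + rho"
  have n_pos: "0 < n" unfolding n_def by simp
  have R_pos: "0 < R" unfolding R_def using k_sup_nonneg rho_pos n_pos by (simp add: add_nonneg_pos)
  have "sqrt n * k_sup + rho / sqrt n = R / sqrt n"
    unfolding R_def using n_pos by (simp add: field_simps)
  then have "(sqrt n * k_sup + rho / sqrt n)\<^sup>2 = R\<^sup>2 / n"
    using n_pos by (simp add: power_divide)
  then show ?thesis
    using expected_sum_integral_kperp_sq_le[of P X, OF assms] n_pos R_pos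
    unfolding n_def[symmetric] R_def[symmetric] by (simp add: field_simps)
qed

lemma expected_noisy_quadratic_form_ge:
  fixes P :: "'w measure" and X :: "'n::finite \<Rightarrow> 'w \<Rightarrow> 'x" and \<xi> :: "'n \<Rightarrow> 'w \<Rightarrow> real"
  assumes P: "prob_space P" and X_meas: "\<And>i. X i \<in> P \<rightarrow>\<^sub>M borel" and X_distr: "\<And>i. distr P borel (X i) = mu"
    and \<xi>_meas: "\<And>i. \<xi> i \<in> borel_measurable P" and \<xi>_L2: "\<And>i. integrable P (\<lambda>\<omega>. (\<xi> i \<omega>)\<^sup>2)"
    and [measurable]: "fs \<in> borel_measurable borel" and fs_L2: "integrable mu (\<lambda>x. (fs x)\<^sup>2)"
    and noise_mean: "\<And>i. AE \<omega> in P. real_cond_exp P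
      (vimage_algebra (space P) (\<lambda>\<omega>. \<lambda>i\<in>UNIV. X i \<omega>) (PiM UNIV (\<lambda>_. borel))) (\<xi> i) \<omega> = 0"
    and noise_cov: "\<And>i j. AE \<omega> in P. real_cond_exp P
      (vimage_algebra (space P) (\<lambda>\<omega>. \<lambda>i\<in>UNIV. X i \<omega>) (PiM UNIV (\<lambda>_. borel)))
      (\<lambda>\<omega>. \<xi> i \<omega> * \<xi> j \<omega>) \<omega> = (if i = j then \<sigma>\<^sup>2 else 0)"
  shows "integrable P (\<lambda>\<omega>. \<Sum>i\<in>UNIV. \<Sum>j\<in>UNIV.
      fs (X i \<omega>) * fs (X j \<omega>) * perp_gram lam act mu k rho (\<lambda>i. X i \<omega>) i j)"
    and "integrable P (\<lambda>\<omega>. \<Sum>i\<in>UNIV. \<Sum>j\<in>UNIV.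
      (fs (X i \<omega>) + \<xi> i \<omega>) * (fs (X j \<omega>) + \<xi> j \<omega>) * perp_gram lam act mu k rho (\<lambda>i. X i \<omega>) i j)"
    and "(\<integral>\<omega>. (\<Sum>i\<in>UNIV. \<Sum>j\<in>UNIV.
        fs (X i \<omega>) * fs (X j \<omega>) * perp_gram lam act mu k rho (\<lambda>i. X i \<omega>) i j) \<partial>P)
      + \<sigma>\<^sup>2 * L2_norm_sq2 mu (kperp lam act k) / (sqrt (real CARD('n)) * k_sup + rho / sqrt (real CARD('n)))\<^sup>2
      \<le> (\<integral>\<omega>. (\<Sum>i\<in>UNIV. \<Sum>j\<in>UNIV.
        (fs (X i \<omega>) + \<xi> i \<omega>) * (fs (X j \<omega>) + \<xi> j \<omega>) * perp_gram lam act mu k rho (\<lambda>i. X i \<omega>) i j) \<partial>P)"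
proof -
  define G where "G = vimage_algebra (space P) (\<lambda>\<omega>. \<lambda>i\<in>UNIV. X i \<omega>) (PiM UNIV (\<lambda>_. borel))"
  interpret sigma_finite_subalgebra P G by (rule sample_subalgebra(1)[OF G_def P X_meas])
  note [measurable] = sample_subalgebra(2,3)[OF G_def P X_meas]
  have fX_G: "(\<lambda>\<omega>. fs (X i \<omega>)) \<in> borel_measurable G"
    and D_G: "(\<lambda>\<omega>. perp_gram lam act mu k rho (\<lambda>i. X i \<omega>) i j) \<in> borel_measurable G" for i j
    by measurable
  have fX_L2: "integrable P (\<lambda>\<omega>. (fs (X i \<omega>))\<^sup>2)" for i
    using integrable_distr_eq[of "X i" P borel "\<lambda>x. (fs x)\<^sup>2"] fs_L2 X_distr X_meas by simp
  note noise = integral_noisy_quadratic_form[where f="\<lambda>i \<omega>. fs (X i \<omega>)" and \<xi>=\<xi>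
      and D="\<lambda>\<omega>. perp_gram lam act mu k rho (\<lambda>i. X i \<omega>)", OF fX_G fX_L2 \<xi>_meas \<xi>_L2 D_G abs_perp_gram_le
      noise_mean[folded G_def] noise_cov[folded G_def]]
  then show "integrable P (\<lambda>\<omega>. \<Sum>i\<in>UNIV. \<Sum>j\<in>UNIV.
      fs (X i \<omega>) * fs (X j \<omega>) * perp_gram lam act mu k rho (\<lambda>i. X i \<omega>) i j)"
    and "integrable P (\<lambda>\<omega>. \<Sum>i\<in>UNIV. \<Sum>j\<in>UNIV.
      (fs (X i \<omega>) + \<xi> i \<omega>) * (fs (X j \<omega>) + \<xi> j \<omega>) * perp_gram lam act mu k rho (\<lambda>i. X i \<omega>) i j)"
    by blast+
  show "(\<integral>\<omega>. (\<Sum>i\<in>UNIV. \<Sum>j\<in>UNIV.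
        fs (X i \<omega>) * fs (X j \<omega>) * perp_gram lam act mu k rho (\<lambda>i. X i \<omega>) i j) \<partial>P)
      + \<sigma>\<^sup>2 * L2_norm_sq2 mu (kperp lam act k) / (sqrt (real CARD('n)) * k_sup + rho / sqrt (real CARD('n)))\<^sup>2
      \<le> (\<integral>\<omega>. (\<Sum>i\<in>UNIV. \<Sum>j\<in>UNIV.
        (fs (X i \<omega>) + \<xi> i \<omega>) * (fs (X j \<omega>) + \<xi> j \<omega>) * perp_gram lam act mu k rho (\<lambda>i. X i \<omega>) i j) \<partial>P)"
    using mult_left_mono[OF L2_norm_sq2_kperp_le[of P X, OF P X_meas X_distr], of "\<sigma>\<^sup>2"]
    unfolding noise(3) by simp
qed

end

theorem theorem5p2:
  fixes lam :: "'g::{topological_group_add, t2_space, second_countable_topology} measure"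
    and act :: "'g \<Rightarrow> 'x::polish_space \<Rightarrow> 'x"
    and \<mu> :: "'x measure"
    and k :: "'x \<Rightarrow> 'x \<Rightarrow> real"
    and fstar :: "'x \<Rightarrow> real"
    and P :: "'w measure" and X :: "'n::finite \<Rightarrow> 'w \<Rightarrow> 'x" and \<xi> :: "'n \<Rightarrow> 'w \<Rightarrow> real"
    and Q :: "'q measure" and Xt :: "'q \<Rightarrow> 'x" and \<xi>t :: "'q \<Rightarrow> real"
    and \<sigma> \<rho> :: real
    and f' :: "'w \<Rightarrow> 'x \<Rightarrow> real"
  assumes G_compact: "compact (UNIV :: 'g set)"
    and haar: "haar_prob lam"
    and action: "measurable_action act"
    and mu_prob: "prob_space \<mu>" and mu_borel: "sets \<mu> = sets borel"
    and mu_inv: "\<And>g. distr \<mu> borel (act g) = \<mu>"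
    and mu_supp: "measure_support \<mu> = UNIV"
    and k_meas: "(\<lambda>(x, y). k x y) \<in> borel_measurable (borel \<Otimes>\<^sub>M borel)"
    and k_pd: "pd_kernel k"
    and k_cont: "\<And>x. continuous_on UNIV (\<lambda>y. k y x)"
    and k_bdd: "bdd_above (range (\<lambda>x. k x x))"
    and fstar_meas: "fstar \<in> borel_measurable borel"
    and fstar_L2: "integrable \<mu> (\<lambda>x. (fstar x)\<^sup>2)"
    and fstar_inv: "\<And>g. AE x in \<mu>. fstar (act g x) = fstar x"
    (* training sample *)
    and P_prob: "prob_space P"
    and X_meas: "\<And>i. X i \<in> measurable P borel"
    and \<xi>_meas: "\<And>i. \<xi> i \<in> borel_measurable P"
    and sample_indep: "prob_space.indep_vars P (\<lambda>_. borel \<Otimes>\<^sub>M borel)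
                         (\<lambda>i \<omega>. (X i \<omega>, fstar (X i \<omega>) + \<xi> i \<omega>)) UNIV"
    and sample_ident: "\<And>i j. distr P (borel \<Otimes>\<^sub>M borel) (\<lambda>\<omega>. (X i \<omega>, fstar (X i \<omega>) + \<xi> i \<omega>))
                           = distr P (borel \<Otimes>\<^sub>M borel) (\<lambda>\<omega>. (X j \<omega>, fstar (X j \<omega>) + \<xi> j \<omega>))"
    and X_distr: "\<And>i. distr P borel (X i) = \<mu>"
    and \<xi>_L2: "\<And>i. integrable P (\<lambda>\<omega>. (\<xi> i \<omega>)\<^sup>2)"
    and noise_mean: "\<And>i. AE \<omega> in P. real_cond_exp P
                 (vimage_algebra (space P) (\<lambda>\<omega>. \<lambda>i\<in>UNIV. X i \<omega>) (PiM UNIV (\<lambda>_. borel))) (\<xi> i) \<omega> = 0"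
    and noise_cov: "\<And>i j. AE \<omega> in P. real_cond_exp P
                 (vimage_algebra (space P) (\<lambda>\<omega>. \<lambda>i\<in>UNIV. X i \<omega>) (PiM UNIV (\<lambda>_. borel)))
                 (\<lambda>\<omega>. \<xi> i \<omega> * \<xi> j \<omega>) \<omega> = (if i = j then \<sigma>\<^sup>2 else 0)"
    (* test point *)
    and Q_prob: "prob_space Q"
    and Xt_meas: "Xt \<in> measurable Q borel"
    and \<xi>t_meas: "\<xi>t \<in> borel_measurable Q"
    and Xt_distr: "distr Q borel Xt = \<mu>"
    and \<xi>t_L2: "integrable Q (\<lambda>q. (\<xi>t q)\<^sup>2)"
    and test_noise_mean: "AE q in Q. real_cond_exp Q (vimage_algebra (space Q) Xt borel) \<xi>t q = 0"
    and test_noise_var: "(\<integral>q. (\<xi>t q)\<^sup>2 \<partial>Q) = \<sigma>\<^sup>2"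
    (* regularisation and competitor *)
    and \<rho>_pos: "\<rho> > 0"
    and f'_meas: "\<And>\<omega>. \<omega> \<in> space P \<Longrightarrow> f' \<omega> \<in> borel_measurable borel"
    and f'_L2: "\<And>\<omega>. \<omega> \<in> space P \<Longrightarrow> integrable \<mu> (\<lambda>x. (f' \<omega> x)\<^sup>2)"
    and f'_better: "\<And>\<omega>. \<omega> \<in> space P \<Longrightarrow>
         risk Q Xt \<xi>t fstar (f' \<omega>)
           \<le> risk Q Xt \<xi>t fstar
                (orbit_avg lam act (krr k \<rho> (\<lambda>i. X i \<omega>) (\<chi> i. fstar (X i \<omega>) + \<xi> i \<omega>)))"
  shows "(\<integral>\<^sup>+ \<omega>. ennreal (risk Q Xt \<xi>t fstar (krr k \<rho> (\<lambda>i. X i \<omega>) (\<chi> i. fstar (X i \<omega>) + \<xi> i \<omega>))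
                        - risk Q Xt \<xi>t fstar (f' \<omega>)) \<partial>P)
         \<ge> (\<integral>\<^sup>+ \<omega>. ennreal (L2_norm_sq \<mu>
                 (\<lambda>x. krr k \<rho> (\<lambda>i. X i \<omega>) (\<chi> i. fstar (X i \<omega>)) x
                      - orbit_avg lam act (krr k \<rho> (\<lambda>i. X i \<omega>) (\<chi> i. fstar (X i \<omega>))) x)) \<partial>P)
           + ennreal (\<sigma>\<^sup>2 * L2_norm_sq2 \<mu> (kperp lam act k)
                 / (sqrt (real CARD('n)) * (SUP x. k x x) + \<rho> / sqrt (real CARD('n)))\<^sup>2)"
proof -
  interpret S: krr_invariance lam act \<mu> k \<rho>
    by (rule krr_invariance.intro) fact+
  note expectation = S.expected_noisy_quadratic_form_ge[OF P_prob X_meas X_distr \<xi>_meas \<xi>_L2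
      fstar_meas fstar_L2 noise_mean noise_cov, unfolded S.k_sup_def]
  have gap: "(\<Sum>i\<in>UNIV. \<Sum>j\<in>UNIV. (fstar (X i \<omega>) + \<xi> i \<omega>) * (fstar (X j \<omega>) + \<xi> j \<omega>)
        * perp_gram lam act \<mu> k \<rho> (\<lambda>i. X i \<omega>) i j)
      \<le> risk Q Xt \<xi>t fstar (krr k \<rho> (\<lambda>i. X i \<omega>) (\<chi> i. fstar (X i \<omega>) + \<xi> i \<omega>))
        - risk Q Xt \<xi>t fstar (f' \<omega>)" if "\<omega> \<in> space P" for \<omega>
    using f'_better[OF that] S.risk_krr_minus_risk_orbit_avg[OF Q_prob Xt_meas \<xi>t_meas Xt_distr \<xi>t_L2
        test_noise_mean test_noise_var fstar_meas fstar_L2 fstar_inv,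
        of "\<lambda>i. X i \<omega>" "\<chi> i. fstar (X i \<omega>) + \<xi> i \<omega>"]
    by simp
  have "0 \<le> \<sigma>\<^sup>2 * L2_norm_sq2 \<mu> (kperp lam act k)
      / (sqrt (real CARD('n)) * (SUP x. k x x) + \<rho> / sqrt (real CARD('n)))\<^sup>2"
    by (intro divide_nonneg_nonneg mult_nonneg_nonneg L2_norm_sq2_nonneg zero_le_power2)
  then show ?thesis
    unfolding S.L2_norm_sq_krr_minus_orbit_avg vec_lambda_beta
    using S.perp_gram_quadratic_form_nonneg[of "\<chi> i. fstar (X i \<omega>) + \<xi> i \<omega>" for \<omega>]
      S.perp_gram_quadratic_form_nonneg[of "\<chi> i. fstar (X i \<omega>)" for \<omega>]
    by (intro nn_integral_ge_integral_add_const[OF expectation(1) _ expectation(2) _ gap expectation(3)])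
      simp_all
qed

end
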